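(* Let $c>1$ be a real number which is not an integer and let $m$ be a positive integer. Then the sequence $(\lfloor n^c\rfloor)_{n}$ is $k$-uniformly distributed modulo $m$ for every integer $k$ with $1\le k\le c+1$.
   Context: For positive integers $m,k$, a sequence of integers $(u_n)_n$ is called $k$-uniformly distributed modulo $m$ if for every block $B\in\{0,1,\ldots,m-1\}^k$, \[\lim_{N\to\infty}\frac1N\operatorname{Card}\{n<N : (u_n,u_{n+1},\ldots,u_{n+k-1})\equiv B \pmod m\}=\frac1{m^k},\] where the congruence of $k$-tuples is understood componentwise. *)

theory Defs
  imports "HOL-Analysis.Analysis"
begin

definition k_unif_distrib_mod :: "nat \<Rightarrow> nat \<Rightarrow> (nat \<Rightarrow> int) \<Rightarrow> bool" where
  "k_unif_distrib_mod k m u \<longleftrightarrow>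
     (\<forall>B :: int list. length B = k \<and> set B \<subseteq> {0..<int m} \<longrightarrow>
        ((\<lambda>N. real (card {n. n < N \<and> (\<forall>i<k. u (n + i) mod int m = B ! i)}) / real N)
          \<longlonglongrightarrow> 1 / real m ^ k))"

end

(*
  Write e(t) = exp(2 pi i t). Suppose that for every nonzero integer vector h the averages
  over n of e(sum_i h_i x(n+i) / m) tend to 0. The congruence floor(x) = b (mod m) confines
  x / m modulo 1 to an arc of length 1/m, and a nonnegative trigonometric polynomial P with
  mean about 1/m that is at least 1 on that arc majorises its indicator; averaging a product
  of k shifted copies of P therefore bounds the frequency of every block of residues of
  floor(x(n)), ..., floor(x(n+k-1)) by about m^-k. Since the m^k block frequencies sum to 1,
  they all tend to m^-k.

  For x(n) = n^c the phase is f(n) = sum_i h_i (n+i)^c / m. Let j be the least index with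
  sum_i h_i i^j <> 0; by Vandermonde j < k, hence j < c. Then f(x) is asymptotic to a nonzero
  multiple of x^(c-j), and, c not being an integer, its r-th derivative for r = ceiling c - j
  is asymptotic to a nonzero multiple of x^(c-j-r) with -1 < c-j-r < 0: it is eventually
  monotone, tends to 0, and n |f^(r)(n)| tends to infinity. Fejer's theorem handles r = 1, and
  van der Corput's difference theorem reduces r by one, because differencing f preserves these
  properties with r - 1 in place of r.
*)
theory Submission
  imports Defs "HOL-Probability.Characteristic_Functions" "HOL-Computational_Algebra.Polynomial"
begin

section \<open>Exponential sums\<close>

definition e2pi :: "real \<Rightarrow> complex" where
  "e2pi t = cis (2 * pi * t)"

definition weyl_sums_vanish :: "(nat \<Rightarrow> real) \<Rightarrow> bool" where
  "weyl_sums_vanish f \<longleftrightarrow> (\<lambda>N. (\<Sum>n<N. e2pi (f n)) / of_nat N) \<longlonglongrightarrow> 0"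

lemma norm_e2pi [simp]: "norm (e2pi t) = 1"
  by (simp add: e2pi_def)

lemma e2pi_0 [simp]: "e2pi 0 = 1"
  by (simp add: e2pi_def)

lemma e2pi_add: "e2pi (a + b) = e2pi a * e2pi b"
  by (simp add: e2pi_def distrib_left cis_mult)

lemma e2pi_minus: "e2pi (- t) = cnj (e2pi t)"
  by (simp add: e2pi_def cis_cnj)

lemma e2pi_uminus_inverse: "e2pi (- t) = inverse (e2pi t)"
  by (simp add: e2pi_def)

lemma e2pi_diff: "e2pi (a - b) = e2pi a * cnj (e2pi b)"
  by (simp add: e2pi_def cis_cnj cis_mult right_diff_distrib)

lemma e2pi_of_int [simp]: "e2pi (of_int h) = 1"
  by (simp add: e2pi_def cis_multiple_2pi)

lemma e2pi_power: "e2pi t ^ n = e2pi (real n * t)"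
  unfolding e2pi_def Complex.DeMoivre by (intro arg_cong[where f = cis]) simp

lemma e2pi_sum: "e2pi (\<Sum>i\<in>A. f i) = (\<Prod>i\<in>A. e2pi (f i))"
  by (induction A rule: infinite_finite_induct) (simp_all add: e2pi_add)

lemma weyl_sums_vanish_uminus:
  assumes "weyl_sums_vanish f"
  shows "weyl_sums_vanish (\<lambda>n. - f n)"
proof -
  have "(\<lambda>N. cnj ((\<Sum>n<N. e2pi (f n)) / of_nat N)) \<longlonglongrightarrow> cnj 0"
    using assms unfolding weyl_sums_vanish_def by (intro tendsto_cnj)
  moreover have "(\<Sum>n<N. e2pi (- f n)) = cnj (\<Sum>n<N. e2pi (f n))" for N
    by (simp add: cnj_sum e2pi_minus)
  ultimately show ?thesis
    unfolding weyl_sums_vanish_def by simp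
qed

section \<open>Van der Corput's difference theorem\<close>

lemma norm_sum_shift_diff_le:
  fixes u :: "nat \<Rightarrow> complex"
  assumes "\<And>n. norm (u n) \<le> 1"
  shows "norm ((\<Sum>n<N. u (n + r)) - (\<Sum>n<N. u n)) \<le> 2 * real r"
proof (induction r)
  case 0
  then show ?case by simp
next
  case (Suc r)
  have "(\<Sum>n<N. u (n + Suc r)) - (\<Sum>n<N. u (n + r)) = u (N + r) - u r"
    using sum_lessThan_telescope[of "\<lambda>n. u (n + r)" N] by (simp add: sum_subtractf)
  then have "(\<Sum>n<N. u (n + Suc r)) - (\<Sum>n<N. u n)
      = (u (N + r) - u r) + ((\<Sum>n<N. u (n + r)) - (\<Sum>n<N. u n))"
    by (simp add: algebra_simps)
  then have "norm ((\<Sum>n<N. u (n + Suc r)) - (\<Sum>n<N. u n))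
      \<le> norm (u (N + r) - u r) + norm ((\<Sum>n<N. u (n + r)) - (\<Sum>n<N. u n))"
    by (metis norm_triangle_ineq)
  moreover have "norm (u (N + r) - u r) \<le> 2"
    using norm_triangle_ineq4[of "u (N + r)" "u r"] assms[of "N + r"] assms[of r] by linarith
  ultimately show ?case
    using Suc by simp
qed

lemma norm_cross_sum_le:
  fixes u :: "nat \<Rightarrow> complex"
  assumes u1: "\<And>n. norm (u n) = 1" and "s \<le> r"
  shows "norm (\<Sum>n<N. u (n + r) * cnj (u (n + s)))
    \<le> norm (\<Sum>n<N. u (n + (r - s)) * cnj (u n)) + 2 * real s"
proof -
  define w where "w n = u (n + (r - s)) * cnj (u n)" for n
  have "(\<Sum>n<N. u (n + r) * cnj (u (n + s))) = (\<Sum>n<N. w (n + s))"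
    using assms(2) by (intro sum.cong) (auto simp: w_def algebra_simps)
  moreover have "norm (w n) \<le> 1" for n
    by (simp add: w_def norm_mult u1)
  ultimately have "norm ((\<Sum>n<N. u (n + r) * cnj (u (n + s))) - (\<Sum>n<N. w n)) \<le> 2 * real s"
    using norm_sum_shift_diff_le[where u = w and N = N and r = s] by simp
  then show ?thesis
    unfolding w_def using norm_triangle_ineq2[of "\<Sum>n<N. u (n + r) * cnj (u (n + s))"
      "\<Sum>n<N. u (n + (r - s)) * cnj (u n)"] by linarith
qed

lemma norm_cross_sum_le_correlations:
  fixes u :: "nat \<Rightarrow> complex"
  assumes u1: "\<And>n. norm (u n) = 1" and "r < H" and "s < H" and "r \<noteq> s"
  shows "norm (\<Sum>n<N. u (n + r) * cnj (u (n + s)))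
    \<le> (\<Sum>d\<in>{1..<H}. norm (\<Sum>n<N. u (n + d) * cnj (u n))) + 2 * real H"
proof -
  have corr_le: "norm (\<Sum>n<N. u (n + d) * cnj (u n))
      \<le> (\<Sum>d\<in>{1..<H}. norm (\<Sum>n<N. u (n + d) * cnj (u n)))" if "1 \<le> d" "d < H" for d
    by (rule member_le_sum) (use that in auto)
  show ?thesis
  proof (cases "s < r")
    case True
    have "norm (\<Sum>n<N. u (n + (r - s)) * cnj (u n))
        \<le> (\<Sum>d\<in>{1..<H}. norm (\<Sum>n<N. u (n + d) * cnj (u n)))"
      by (rule corr_le) (use True assms in auto)
    then show ?thesis
      using norm_cross_sum_le[where u = u and s = s and r = r and N = N, OF u1] True assms by simp
  next
    case False
    then have "s > r" using assms by simp
    have "(\<Sum>n<N. u (n + r) * cnj (u (n + s))) = cnj (\<Sum>n<N. u (n + s) * cnj (u (n + r)))"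
      by (simp add: mult.commute)
    then have "norm (\<Sum>n<N. u (n + r) * cnj (u (n + s))) = norm (\<Sum>n<N. u (n + s) * cnj (u (n + r)))"
      by (metis complex_mod_cnj)
    moreover have "norm (\<Sum>n<N. u (n + (s - r)) * cnj (u n))
        \<le> (\<Sum>d\<in>{1..<H}. norm (\<Sum>n<N. u (n + d) * cnj (u n)))"
      by (rule corr_le) (use \<open>s > r\<close> assms in auto)
    ultimately show ?thesis
      using norm_cross_sum_le[where u = u and s = r and r = s and N = N, OF u1] \<open>s > r\<close> assms by simp
  qed
qed

lemma norm_sum_windows_approx:
  fixes u :: "nat \<Rightarrow> complex"
  assumes "\<And>n. norm (u n) = 1"
  shows "norm (of_nat H * (\<Sum>n<N. u n) - (\<Sum>n<N. \<Sum>r<H. u (n + r))) \<le> 2 * real H ^ 2"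
proof -
  have "of_nat H * (\<Sum>n<N. u n) - (\<Sum>n<N. \<Sum>r<H. u (n + r))
      = (\<Sum>r<H. (\<Sum>n<N. u n) - (\<Sum>n<N. u (n + r)))"
    by (simp add: sum_subtractf sum.swap[of _ "{..<H}"])
  also have "norm \<dots> \<le> (\<Sum>r<H. norm ((\<Sum>n<N. u n) - (\<Sum>n<N. u (n + r))))"
    by (rule norm_sum)
  also have "\<dots> \<le> (\<Sum>r<H. 2 * real H)"
  proof (rule sum_mono)
    fix r assume "r \<in> {..<H}"
    then show "norm ((\<Sum>n<N. u n) - (\<Sum>n<N. u (n + r))) \<le> 2 * real H"
      using norm_sum_shift_diff_le[where u = u and N = N and r = r] assms
      by (simp add: norm_minus_commute)
  qed
  also have "\<dots> = 2 * real H ^ 2"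
    by (simp add: power2_eq_square)
  finally show ?thesis .
qed

lemma sum_norm_cross_sums_le:
  fixes u :: "nat \<Rightarrow> complex"
  assumes u1: "\<And>n. norm (u n) = 1"
  shows "(\<Sum>r<H. \<Sum>s<H. norm (\<Sum>n<N. u (n + r) * cnj (u (n + s))))
    \<le> real H * real N + real H ^ 2 * (\<Sum>d\<in>{1..<H}. norm (\<Sum>n<N. u (n + d) * cnj (u n)))
      + 2 * real H ^ 3"
proof -
  define Sg where "Sg = (\<Sum>d\<in>{1..<H}. norm (\<Sum>n<N. u (n + d) * cnj (u n)))"
  have Sg0: "Sg \<ge> 0"
    unfolding Sg_def by (simp add: sum_nonneg)
  have "(\<Sum>r<H. \<Sum>s<H. norm (\<Sum>n<N. u (n + r) * cnj (u (n + s))))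
      \<le> (\<Sum>r<H. \<Sum>s<H. (if r = s then real N else 0) + Sg + 2 * real H)"
  proof (intro sum_mono)
    fix r s assume rs: "r \<in> {..<H}" "s \<in> {..<H}"
    show "norm (\<Sum>n<N. u (n + r) * cnj (u (n + s))) \<le> (if r = s then real N else 0) + Sg + 2 * real H"
    proof (cases "r = s")
      case True
      have "norm (\<Sum>n<N. u (n + r) * cnj (u (n + s))) \<le> (\<Sum>n<N. norm (u (n + r) * cnj (u (n + s))))"
        by (rule norm_sum)
      then show ?thesis
        using True Sg0 by (simp add: norm_mult u1)
    next
      case False
      then show ?thesis
        using norm_cross_sum_le_correlations[where u = u and r = r and s = s and H = H and N = N, OF u1]
          rs
        unfolding Sg_def by simp
    qed
  qed
  also have "\<dots> = real H * real N + real H ^ 2 * Sg + 2 * real H ^ 3"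
    by (simp add: sum.distrib power2_eq_square power3_eq_cube algebra_simps)
  finally show ?thesis
    unfolding Sg_def .
qed

lemma norm_sum_windows_sq_le:
  fixes u :: "nat \<Rightarrow> complex"
  shows "(norm (\<Sum>n<N. \<Sum>r<H. u (n + r)))\<^sup>2
    \<le> real N * (\<Sum>r<H. \<Sum>s<H. norm (\<Sum>n<N. u (n + r) * cnj (u (n + s))))"
proof -
  define v where "v n = (\<Sum>r<H. u (n + r))" for n
  have "norm (\<Sum>n<N. v n) \<le> (\<Sum>n<N. norm (v n))"
    by (rule norm_sum)
  then have "(norm (\<Sum>n<N. v n))\<^sup>2 \<le> (\<Sum>n<N. norm (v n))\<^sup>2"
    by (simp add: power_mono)
  also have "\<dots> \<le> (\<Sum>n<N. (norm (v n))\<^sup>2) * real N"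
    using sum_squared_le_sum_of_squares[of "\<lambda>n. norm (v n)" "{..<N}"] by simp
  finally have CS: "(norm (\<Sum>n<N. v n))\<^sup>2 \<le> (\<Sum>n<N. (norm (v n))\<^sup>2) * real N" .
  have sq: "complex_of_real ((norm (v n))\<^sup>2) = (\<Sum>r<H. \<Sum>s<H. u (n + r) * cnj (u (n + s)))" for n
    unfolding complex_norm_square v_def by (simp add: sum_product cnj_sum)
  have "(\<Sum>n<N. (norm (v n))\<^sup>2) = norm (complex_of_real (\<Sum>n<N. (norm (v n))\<^sup>2))"
    by (simp only: norm_of_real abs_of_nonneg[OF sum_nonneg] zero_le_power2)
  also have "complex_of_real (\<Sum>n<N. (norm (v n))\<^sup>2)
      = (\<Sum>r<H. \<Sum>s<H. \<Sum>n<N. u (n + r) * cnj (u (n + s)))"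
    unfolding of_real_sum sq by (simp add: sum.swap[of _ "{..<N}"])
  also have "norm \<dots> \<le> (\<Sum>r<H. norm (\<Sum>s<H. \<Sum>n<N. u (n + r) * cnj (u (n + s))))"
    by (rule norm_sum)
  also have "\<dots> \<le> (\<Sum>r<H. \<Sum>s<H. norm (\<Sum>n<N. u (n + r) * cnj (u (n + s))))"
    by (intro sum_mono norm_sum)
  finally have "(\<Sum>n<N. (norm (v n))\<^sup>2) * real N
      \<le> (\<Sum>r<H. \<Sum>s<H. norm (\<Sum>n<N. u (n + r) * cnj (u (n + s)))) * real N"
    by (rule mult_right_mono) simp
  with CS show ?thesis
    unfolding v_def by (simp add: mult.commute)
qed

lemma van_der_Corput_inequality:
  fixes u :: "nat \<Rightarrow> complex"
  assumes u1: "\<And>n. norm (u n) = 1" and H: "H \<ge> 1"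
  shows "(norm (\<Sum>n<N. u n))\<^sup>2 \<le> 2 * real N ^ 2 / real H
     + 2 * real N * (\<Sum>d\<in>{1..<H}. norm (\<Sum>n<N. u (n + d) * cnj (u n)))
     + 4 * real N * real H + 8 * real H ^ 2"
proof -
  define S where "S = (\<Sum>n<N. u n)"
  define W where "W = (\<Sum>n<N. \<Sum>r<H. u (n + r))"
  define Sg where "Sg = (\<Sum>d\<in>{1..<H}. norm (\<Sum>n<N. u (n + d) * cnj (u n)))"
  have Hpos: "real H > 0"
    using H by simp
  have "real H * norm S \<le> norm W + 2 * real H ^ 2"
    using norm_sum_windows_approx[where u = u and H = H and N = N, OF u1]
      norm_triangle_ineq2[of "of_nat H * S" W]
    unfolding S_def W_def by (simp add: norm_mult)
  then have "(real H * norm S)\<^sup>2 \<le> (norm W + 2 * real H ^ 2)\<^sup>2"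
    by (intro power_mono) auto
  also have "\<dots> \<le> 2 * (norm W)\<^sup>2 + 8 * real H ^ 4"
    using zero_le_power2[of "norm W - 2 * real H ^ 2"]
    by (simp add: power2_eq_square power4_eq_xxxx algebra_simps)
  also have "(norm W)\<^sup>2 \<le> real N * (real H * real N + real H ^ 2 * Sg + 2 * real H ^ 3)"
    unfolding W_def Sg_def
    using norm_sum_windows_sq_le[where u = u and N = N and H = H]
      sum_norm_cross_sums_le[where u = u and N = N and H = H, OF u1]
    by (meson mult_left_mono of_nat_0_le_iff order_trans)
  also have "2 * (real N * (real H * real N + real H ^ 2 * Sg + 2 * real H ^ 3)) + 8 * real H ^ 4
      = real H ^ 2 * (2 * real N ^ 2 / real H + 2 * real N * Sg + 4 * real N * real H + 8 * real H ^ 2)"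
    using Hpos by (simp add: field_simps power2_eq_square power3_eq_cube power4_eq_xxxx)
  finally have "real H ^ 2 * (norm S)\<^sup>2
      \<le> real H ^ 2 * (2 * real N ^ 2 / real H + 2 * real N * Sg + 4 * real N * real H + 8 * real H ^ 2)"
    by (simp add: power_mult_distrib)
  then show ?thesis
    unfolding S_def Sg_def using Hpos by (simp add: mult_le_cancel_left)
qed

lemma avg_tendsto_0_if_correlations_tendsto_0:
  fixes u :: "nat \<Rightarrow> complex"
  assumes u1: "\<And>n. norm (u n) = 1"
    and corr: "\<And>d. d \<ge> 1 \<Longrightarrow> (\<lambda>N. (\<Sum>n<N. u (n + d) * cnj (u n)) / of_nat N) \<longlonglongrightarrow> 0"
  shows "(\<lambda>N. (\<Sum>n<N. u n) / of_nat N) \<longlonglongrightarrow> 0"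
proof (rule tendstoI)
  fix e :: real
  assume e: "e > 0"
  define C where "C N d = norm (\<Sum>n<N. u (n + d) * cnj (u n)) / real N" for N d
  define err where
    "err H N = 2 * (\<Sum>d\<in>{1..<H}. C N d) + 4 * real H / real N + 8 * real H ^ 2 / real N ^ 2"
    for H N
  have bound: "(norm ((\<Sum>n<N. u n) / of_nat N))\<^sup>2 \<le> 2 / real H + err H N" if "H \<ge> 1" "N \<ge> 1" for H N
  proof -
    have "(norm (\<Sum>n<N. u n))\<^sup>2 / real N ^ 2 \<le> 2 / real H + err H N"
      using van_der_Corput_inequality[where u = u and H = H and N = N, OF u1 \<open>H \<ge> 1\<close>] that
      unfolding err_def C_def by (simp add: field_simps power2_eq_square sum_divide_distrib[symmetric])
    then show ?thesis
      by (simp add: norm_divide power_divide)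
  qed
  have err_lim: "err H \<longlonglongrightarrow> 0" for H
  proof -
    have "(\<lambda>N. C N d) \<longlonglongrightarrow> 0" if "d \<in> {1..<H}" for d
      using tendsto_norm_zero[OF corr[of d]] that unfolding C_def by (simp add: norm_divide)
    moreover have "(\<lambda>N. 8 * real H ^ 2 / real N ^ 2) \<longlonglongrightarrow> 0"
      using tendsto_mult[OF lim_const_over_n[of "8 * real H ^ 2"] lim_const_over_n[of 1]]
      by (simp add: power2_eq_square)
    ultimately have "err H \<longlonglongrightarrow> 2 * (\<Sum>d\<in>{1..<H}. 0) + 0 + 0"
      unfolding err_def by (intro tendsto_intros) auto
    then show ?thesis
      by simp
  qed
  obtain H :: nat where H: "H \<ge> 1" "2 / real H < e\<^sup>2 / 2"
  proof
    define H where "H = nat \<lceil>4 / e\<^sup>2\<rceil> + 1"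
    have "real H > 4 / e\<^sup>2" "real H > 0"
      unfolding H_def by linarith+
    then show "2 / real H < e\<^sup>2 / 2"
      using e by (simp add: field_simps)
  qed simp
  have "eventually (\<lambda>N. err H N < e\<^sup>2 / 2) sequentially"
    using err_lim e by (intro order_tendstoD(2)) auto
  with eventually_ge_at_top[of 1]
  show "eventually (\<lambda>N. dist ((\<Sum>n<N. u n) / of_nat N) 0 < e) sequentially"
  proof eventually_elim
    case (elim N)
    then have "(norm ((\<Sum>n<N. u n) / of_nat N))\<^sup>2 < e\<^sup>2"
      using bound[OF H(1), of N] H(2) by linarith
    then show ?case
      using e by (simp add: power_less_imp_less_base)
  qed
qed

theorem van_der_Corput_difference:
  fixes f :: "nat \<Rightarrow> real"
  assumes "\<And>d. d \<ge> 1 \<Longrightarrow> weyl_sums_vanish (\<lambda>n. f (n + d) - f n)"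
  shows "weyl_sums_vanish f"
proof -
  have corr: "(\<lambda>N. (\<Sum>n<N. e2pi (f (n + d)) * cnj (e2pi (f n))) / of_nat N) \<longlonglongrightarrow> 0"
    if "d \<ge> 1" for d
    using assms[OF that] unfolding weyl_sums_vanish_def by (simp add: e2pi_diff)
  show ?thesis
    unfolding weyl_sums_vanish_def by (rule avg_tendsto_0_if_correlations_tendsto_0[OF _ corr]) simp_all
qed

section \<open>Fejer's theorem\<close>

lemma norm_e2pi_sub_linear_le: "norm (e2pi t - 1 - \<i> * (2 * pi * t)) \<le> 2 * pi\<^sup>2 * t\<^sup>2"
proof -
  have "norm (iexp (2 * pi * t) - (\<Sum>k \<le> 1. (\<i> * (2 * pi * t))^k / fact k)) \<le> \<bar>2 * pi * t\<bar>^2 / fact 2"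
    using iexp_approx1[of "2 * pi * t" 1] by (simp add: numeral_2_eq_2)
  moreover have "(\<Sum>k \<le> 1. (\<i> * (2 * pi * t))^k / fact k) = 1 + \<i> * (2 * pi * t)" by simp
  moreover have "\<bar>2 * pi * t\<bar>^2 / fact 2 = 2 * pi\<^sup>2 * t\<^sup>2"
    by (simp add: power2_eq_square abs_mult)
  moreover have "e2pi t = iexp (2 * pi * t)"
    by (simp add: e2pi_def cis_conv_exp mult.commute)
  ultimately show ?thesis
    by (simp add: diff_diff_add)
qed

lemma norm_e2pi_step_le:
  fixes E :: complex and g g' D :: real
  assumes E1: "norm E = 1" and gp: "g' > 0" and "g' \<le> D" "D \<le> g"
  shows "norm ((E * e2pi D - E) / of_real g - \<i> * (2 * pi) * E) \<le> 2 * pi\<^sup>2 * g + 2 * pi * ((g - g') / g)"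
proof -
  have g0: "g > 0" using assms by linarith
  define c where "c = \<i> * (2 * complex_of_real pi)"
  have nc: "norm c = 2 * pi" by (simp add: c_def norm_mult)
  have eq: "(E * e2pi D - E) / of_real g - c * E
     = E * ((e2pi D - 1 - c * of_real D) / of_real g) + E * (c * ((of_real D - of_real g) / of_real g))"
    using g0 by (simp add: field_simps)
  have ap: "norm (e2pi D - 1 - c * of_real D) \<le> 2 * pi\<^sup>2 * D\<^sup>2"
    using norm_e2pi_sub_linear_le[of D] by (simp add: c_def mult.assoc)
  have n1: "norm (E * ((e2pi D - 1 - c * of_real D) / of_real g)) \<le> 2 * pi\<^sup>2 * g"
  proof -
    have "norm (E * ((e2pi D - 1 - c * of_real D) / of_real g)) = norm (e2pi D - 1 - c * of_real D) / g"
      using g0 E1 by (simp add: norm_mult norm_divide)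
    also have "\<dots> \<le> 2 * pi\<^sup>2 * D\<^sup>2 / g" using ap g0 by (simp add: divide_right_mono)
    also have "\<dots> \<le> 2 * pi\<^sup>2 * g\<^sup>2 / g"
      using assms g0 by (intro divide_right_mono mult_left_mono power_mono) auto
    also have "\<dots> = 2 * pi\<^sup>2 * g" using g0 by (simp add: power2_eq_square)
    finally show ?thesis .
  qed
  have n2: "norm (E * (c * ((of_real D - of_real g) / of_real g))) \<le> 2 * pi * ((g - g') / g)"
  proof -
    have "norm (E * (c * ((of_real D - of_real g) / of_real g))) = 2 * pi * (\<bar>D - g\<bar> / g)"
      using E1 g0 nc by (simp add: norm_mult norm_divide flip: of_real_diff)
    also have "\<bar>D - g\<bar> / g \<le> (g - g') / g" using assms g0 by (simp add: divide_right_mono)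
    finally show ?thesis by simp
  qed
  have "norm ((E * e2pi D - E) / of_real g - c * E) \<le> 2 * pi\<^sup>2 * g + 2 * pi * ((g - g') / g)"
    unfolding eq using norm_triangle_le[OF add_mono[OF n1 n2]] .
  then show ?thesis by (simp add: c_def)
qed

lemma norm_sum_diff_mult_le:
  fixes E :: "nat \<Rightarrow> complex" and w :: "nat \<Rightarrow> real"
  assumes E1: "\<And>n. norm (E n) \<le> 1" and wpos: "\<And>n. n \<ge> a \<Longrightarrow> w n > 0"
    and wmono: "\<And>n. n \<ge> a \<Longrightarrow> w n \<le> w (Suc n)" and N: "N \<ge> a"
  shows "norm (\<Sum>n\<in>{a..<N}. (E (Suc n) - E n) * of_real (w n)) \<le> 2 * w N"
proof -
  have claim: "norm ((\<Sum>n\<in>{a..<N}. (E (Suc n) - E n) * of_real (w n)) - E N * of_real (w N)) \<le> w N"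
    using N
  proof (induction N rule: dec_induct)
    case base
    then show ?case using E1[of a] wpos[of a] by (simp add: norm_mult mult_left_le_one_le)
  next
    case (step N)
    have eq: "(\<Sum>n\<in>{a..<Suc N}. (E (Suc n) - E n) * of_real (w n)) - E (Suc N) * of_real (w (Suc N))
      = ((\<Sum>n\<in>{a..<N}. (E (Suc n) - E n) * of_real (w n)) - E N * of_real (w N))
        - E (Suc N) * of_real (w (Suc N) - w N)"
      using step(1) by (simp add: algebra_simps)
    have "norm (E (Suc N) * of_real (w (Suc N) - w N)) = norm (E (Suc N)) * \<bar>w (Suc N) - w N\<bar>"
      by (simp only: norm_mult norm_of_real)
    also have "\<dots> \<le> w (Suc N) - w N"
      using E1[of "Suc N"] wmono[OF step(1)] by (simp add: mult_left_le_one_le)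
    finally have "norm (E (Suc N) * of_real (w (Suc N) - w N)) \<le> w (Suc N) - w N" .
    then show ?case unfolding eq using step(3) norm_triangle_ineq4 by (smt (verit))
  qed
  have "norm (E N * of_real (w N)) \<le> w N"
    using E1[of N] wpos[OF N] by (simp add: norm_mult mult_left_le_one_le)
  then show ?thesis using claim norm_triangle_ineq2 by (smt (verit))
qed

lemma cesaro_abs_tendsto_0:
  fixes x :: "nat \<Rightarrow> real"
  assumes "x \<longlonglongrightarrow> 0"
  shows "(\<lambda>N. (\<Sum>n<N. \<bar>x n\<bar>) / real N) \<longlonglongrightarrow> 0"
proof -
  have main: "eventually (\<lambda>N. \<bar>(\<Sum>n<N. \<bar>x n\<bar>) / real N\<bar> < e) sequentially" if e: "e > 0" for e
  proof -
    obtain M where M: "\<And>n. n \<ge> M \<Longrightarrow> \<bar>x n\<bar> < e / 2"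
      using assms e unfolding LIMSEQ_def dist_real_def by (metis diff_zero half_gt_zero)
    define C where "C = (\<Sum>n<M. \<bar>x n\<bar>)"
    obtain n0 :: nat where n0: "2 * C / e + 1 < real n0" using reals_Archimedean2 by blast
    have "eventually (\<lambda>N. N \<ge> max M n0) sequentially" by (rule eventually_ge_at_top)
    then have ev: "eventually (\<lambda>N. N \<ge> M \<and> real N > 2 * C / e + 1) sequentially"
    proof (rule eventually_mono)
      fix N assume "N \<ge> max M n0"
      then have "N \<ge> M" "real N \<ge> real n0" by auto
      then show "N \<ge> M \<and> real N > 2 * C / e + 1" using n0 by linarith
    qed
    show ?thesis using ev
    proof eventually_elim
      case (elim N)
      have C0: "C \<ge> 0" unfolding C_def by (simp add: sum_nonneg)
      have Np: "real N > 0" using elim C0 e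
        by (smt (verit, del_insts) divide_nonneg_pos)
      have "(\<Sum>n<N. \<bar>x n\<bar>) = C + (\<Sum>n\<in>{M..<N}. \<bar>x n\<bar>)"
        unfolding C_def using elim by (metis sum.atLeastLessThan_concat lessThan_atLeast0 zero_le)
      also have "(\<Sum>n\<in>{M..<N}. \<bar>x n\<bar>) \<le> (\<Sum>n\<in>{M..<N}. e / 2)"
        using M by (intro sum_mono) (auto intro: less_imp_le)
      also have "\<dots> \<le> real N * (e / 2)" using e by simp
      finally have s: "(\<Sum>n<N. \<bar>x n\<bar>) \<le> C + real N * (e / 2)" by simp
      have "C < real N * (e / 2)"
      proof -
        have "2 * C / e < real N" using elim by linarith
        then show ?thesis using e by (simp add: field_simps)
      qed
      then have "(\<Sum>n<N. \<bar>x n\<bar>) < real N * e" using s by linarith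
      then show ?case using Np by (simp add: sum_nonneg field_simps)
    qed
  qed
  show ?thesis unfolding tendsto_iff dist_real_def using main by simp
qed

lemma fejer_step_le:
  fixes f f' :: "real \<Rightarrow> real" and a :: nat
  assumes der: "\<And>x. x \<ge> real a \<Longrightarrow> (f has_real_derivative f' x) (at x)"
    and mono: "\<And>x y. real a \<le> x \<Longrightarrow> x \<le> y \<Longrightarrow> f' y \<le> f' x"
    and pos: "\<And>x. x \<ge> real a \<Longrightarrow> f' x > 0"
    and n: "n \<ge> a"
  shows "norm ((e2pi (f (real (Suc n))) - e2pi (f (real n))) / of_real (f' (real n))
      - \<i> * (2 * pi) * e2pi (f (real n)))
    \<le> 2 * pi\<^sup>2 * f' (real n) + 2 * pi * (f' (real a) * (1 / f' (real (Suc n)) - 1 / f' (real n)))"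
proof -
  define E where "E n = e2pi (f (real n))" for n
  define g where "g n = f' (real n)" for n
  have E1: "norm (E n) = 1" for n
    by (simp add: E_def)
  have gpos: "g n > 0" if "n \<ge> a" for n
    using pos that unfolding g_def by simp
  have gmono: "g (Suc n) \<le> g n" if "n \<ge> a" for n
    using mono that unfolding g_def by simp
  have gmono2: "g n \<le> g a" if "n \<ge> a" for n
    using that by (induction n rule: dec_induct) (auto intro: order.trans[OF gmono])
  define D where "D = f (real n + 1) - f (real n)"
  obtain z where z: "real n < z" "z < real n + 1"
    "f (real n + 1) - f (real n) = (real n + 1 - real n) * f' z"
    using MVT2[of "real n" "real n + 1" f f'] der n by force
  have Dz: "D = f' z" using z(3) unfolding D_def by simp
  have D1: "g (Suc n) \<le> D" unfolding Dz g_def using mono[of z "real (Suc n)"] z n by simp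
  have D2: "D \<le> g n" unfolding Dz g_def using mono[of "real n" z] z n by simp
  have "f (real (Suc n)) = f (real n) + D" unfolding D_def by (simp add: algebra_simps)
  then have ES: "E (Suc n) = E n * e2pi D" unfolding E_def by (simp add: e2pi_add)
  have "norm ((E n * e2pi D - E n) / of_real (g n) - \<i> * (2 * pi) * E n)
     \<le> 2 * pi\<^sup>2 * g n + 2 * pi * ((g n - g (Suc n)) / g n)"
    using norm_e2pi_step_le[OF E1 gpos D1 D2] n by simp
  moreover have "(g n - g (Suc n)) / g n \<le> g a * (1 / g (Suc n) - 1 / g n)"
  proof -
    have p1: "g (Suc n) > 0" "g n > 0" using gpos n by auto
    have "(g n - g (Suc n)) / g n = g (Suc n) * (1 / g (Suc n) - 1 / g n)"
      using p1 by (simp add: field_simps)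
    also have "\<dots> \<le> g a * (1 / g (Suc n) - 1 / g n)"
      using p1 gmono[OF n] gmono2[of "Suc n"] n
      by (intro mult_right_mono) (auto simp: field_simps)
    finally show ?thesis .
  qed
  ultimately have "norm ((E (Suc n) - E n) / of_real (g n) - \<i> * (2 * pi) * E n)
      \<le> 2 * pi\<^sup>2 * g n + 2 * pi * (g a * (1 / g (Suc n) - 1 / g n))"
    unfolding ES by (smt (verit) mult_left_mono pi_gt_zero)
  then show ?thesis
    unfolding E_def g_def .
qed

lemma fejer_partial_sum_le:
  fixes f f' :: "real \<Rightarrow> real" and a :: nat
  assumes der: "\<And>x. x \<ge> real a \<Longrightarrow> (f has_real_derivative f' x) (at x)"
    and mono: "\<And>x y. real a \<le> x \<Longrightarrow> x \<le> y \<Longrightarrow> f' y \<le> f' x"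
    and pos: "\<And>x. x \<ge> real a \<Longrightarrow> f' x > 0"
    and N: "N \<ge> a"
  shows "2 * pi * norm (\<Sum>n\<in>{a..<N}. e2pi (f (real n)))
    \<le> 2 / f' (real N) + 2 * pi * f' (real a) / f' (real N) + 2 * pi\<^sup>2 * (\<Sum>n<N. \<bar>f' (real n)\<bar>)"
proof -
  define E where "E n = e2pi (f (real n))" for n
  define g where "g n = f' (real n)" for n
  have E1: "norm (E n) = 1" for n
    by (simp add: E_def)
  have gpos: "g n > 0" if "n \<ge> a" for n
    using pos that unfolding g_def by simp
  have gmono: "g (Suc n) \<le> g n" if "n \<ge> a" for n
    using mono that unfolding g_def by simp
  have per_n: "norm ((E (Suc n) - E n) / of_real (g n) - \<i> * (2 * pi) * E n)
      \<le> 2 * pi\<^sup>2 * g n + 2 * pi * (g a * (1 / g (Suc n) - 1 / g n))" if "n \<ge> a" for n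
    unfolding E_def g_def using der mono pos that by (rule fejer_step_le)
  define A where "A = (\<Sum>n\<in>{a..<N}. (E (Suc n) - E n) / of_real (g n))"
  define B where "B = (\<Sum>n\<in>{a..<N}. E n)"
  have AB: "A - \<i> * (2 * pi) * B = (\<Sum>n\<in>{a..<N}. (E (Suc n) - E n) / of_real (g n) - \<i> * (2 * pi) * E n)"
    unfolding A_def B_def by (simp add: sum_subtractf sum_distrib_left)
  have "norm (A - \<i> * (2 * pi) * B)
      \<le> (\<Sum>n\<in>{a..<N}. norm ((E (Suc n) - E n) / of_real (g n) - \<i> * (2 * pi) * E n))"
    unfolding AB by (rule norm_sum)
  also have "\<dots> \<le> (\<Sum>n\<in>{a..<N}. 2 * pi\<^sup>2 * g n + 2 * pi * (g a * (1 / g (Suc n) - 1 / g n)))"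
    by (intro sum_mono per_n) auto
  also have "\<dots> = 2 * pi\<^sup>2 * (\<Sum>n\<in>{a..<N}. g n) + 2 * pi * g a * (\<Sum>n\<in>{a..<N}. 1 / g (Suc n) - 1 / g n)"
    by (simp add: sum.distrib sum_distrib_left mult.assoc)
  also have "(\<Sum>n\<in>{a..<N}. 1 / g (Suc n) - 1 / g n) = 1 / g N - 1 / g a"
    using sum_Suc_diff'[OF N, of "\<lambda>n. 1 / g n"] by simp
  also have "(\<Sum>n\<in>{a..<N}. g n) \<le> (\<Sum>n<N. \<bar>g n\<bar>)"
  proof -
    have "(\<Sum>n\<in>{a..<N}. g n) \<le> (\<Sum>n\<in>{a..<N}. \<bar>g n\<bar>)" by (intro sum_mono) simp
    also have "\<dots> \<le> (\<Sum>n<N. \<bar>g n\<bar>)" by (intro sum_mono2) auto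
    finally show ?thesis .
  qed
  finally have c1: "norm (A - \<i> * (2 * pi) * B)
      \<le> 2 * pi\<^sup>2 * (\<Sum>n<N. \<bar>g n\<bar>) + 2 * pi * g a * (1 / g N - 1 / g a)"
    by (smt (verit) mult_left_mono pi_gt_zero zero_le_power2)
  have gaN: "g a > 0" "g N > 0" using gpos N by auto
  have c2: "2 * pi * g a * (1 / g N - 1 / g a) \<le> 2 * pi * g a / g N"
    using gaN by (simp add: field_simps)
  have "A = (\<Sum>n\<in>{a..<N}. (E (Suc n) - E n) * of_real (1 / g n))"
    unfolding A_def by (simp add: divide_inverse)
  then have c3: "norm A \<le> 2 * (1 / g N)"
    using norm_sum_diff_mult_le[where E=E and w="\<lambda>n. 1 / g n" and a=a and N=N] E1 gpos gmono N
    by (simp add: frac_le)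
  have "2 * pi * norm B = norm (\<i> * (2 * pi) * B)" by (simp add: norm_mult)
  also have "\<dots> \<le> norm A + norm (A - \<i> * (2 * pi) * B)" by (metis norm_minus_commute norm_triangle_sub)
  finally show ?thesis
    using c1 c2 c3 unfolding B_def E_def g_def by simp
qed

theorem fejer_weyl_sums_vanish:
  fixes f f' :: "real \<Rightarrow> real" and a :: nat
  assumes der: "\<And>x. x \<ge> real a \<Longrightarrow> (f has_real_derivative f' x) (at x)"
    and mono: "\<And>x y. real a \<le> x \<Longrightarrow> x \<le> y \<Longrightarrow> f' y \<le> f' x"
    and pos: "\<And>x. x \<ge> real a \<Longrightarrow> f' x > 0"
    and lim0: "(\<lambda>n. f' (real n)) \<longlonglongrightarrow> 0"
    and limI: "filterlim (\<lambda>n. real n * f' (real n)) at_top sequentially"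
  shows "weyl_sums_vanish (\<lambda>n. f (real n))"
proof -
  define E where "E n = e2pi (f (real n))" for n
  define g where "g n = f' (real n)" for n
  have E1: "norm (E n) = 1" for n
    by (simp add: E_def)
  have gpos: "g n > 0" if "n \<ge> a" for n
    using pos that unfolding g_def by simp
  have bound: "2 * pi * norm (\<Sum>n\<in>{a..<N}. E n) \<le> 2 / g N + 2 * pi * g a / g N + 2 * pi\<^sup>2 * (\<Sum>n<N. \<bar>g n\<bar>)"
    if "N \<ge> a" for N
    unfolding E_def g_def using der mono pos that by (rule fejer_partial_sum_le)
  define R where "R N = real a * inverse (real N) + ((1 / pi + g a) * inverse (real N * g N))
    + pi * ((\<Sum>n<N. \<bar>g n\<bar>) / real N)" for N
  have geq: "g = (\<lambda>n. f' (real n))" by (rule ext) (simp add: g_def)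
  have glim: "g \<longlonglongrightarrow> 0" using lim0 unfolding geq .
  have Rlim: "R \<longlonglongrightarrow> real a * 0 + (1 / pi + g a) * 0 + pi * 0"
    unfolding R_def
    by (intro tendsto_add tendsto_mult tendsto_const lim_inverse_n cesaro_abs_tendsto_0 glim
        tendsto_inverse_0_at_top limI[unfolded g_def[symmetric]])
  have ev: "eventually (\<lambda>N. norm ((\<Sum>n<N. E n) / of_nat N) \<le> R N) sequentially"
    using eventually_ge_at_top[of "max a 1"]
  proof eventually_elim
    case (elim N)
    then have N: "N \<ge> a" "N \<ge> 1" by auto
    have gN: "g N > 0" using gpos N by auto
    have "(\<Sum>n<N. E n) = (\<Sum>n<a. E n) + (\<Sum>n\<in>{a..<N}. E n)"
      using N by (metis sum.atLeastLessThan_concat lessThan_atLeast0 zero_le)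
    then have "norm (\<Sum>n<N. E n) \<le> norm (\<Sum>n<a. E n) + norm (\<Sum>n\<in>{a..<N}. E n)"
      by (simp add: norm_triangle_ineq)
    also have "norm (\<Sum>n<a. E n) \<le> real a"
      using norm_sum[of E "{..<a}"] E1 by simp
    also have "norm (\<Sum>n\<in>{a..<N}. E n)
        \<le> (2 / g N + 2 * pi * g a / g N + 2 * pi\<^sup>2 * (\<Sum>n<N. \<bar>g n\<bar>)) / (2 * pi)"
      using bound[OF N(1)] by (simp add: field_simps)
    finally have "norm (\<Sum>n<N. E n)
        \<le> real a + (2 / g N + 2 * pi * g a / g N + 2 * pi\<^sup>2 * (\<Sum>n<N. \<bar>g n\<bar>)) / (2 * pi)"
      by simp
    moreover have "(real a + (2 / g N + 2 * pi * g a / g N + 2 * pi\<^sup>2 * (\<Sum>n<N. \<bar>g n\<bar>)) / (2 * pi))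
        / real N = R N"
      unfolding R_def using gN N by (simp add: field_simps power2_eq_square)
    ultimately have "norm (\<Sum>n<N. E n) / real N \<le> R N"
      by (metis divide_right_mono of_nat_0_le_iff)
    moreover have "norm ((\<Sum>n<N. E n) / of_nat N) = norm (\<Sum>n<N. E n) / real N"
      by (simp add: norm_divide)
    ultimately show ?case by simp
  qed
  have "(\<lambda>N. (\<Sum>n<N. E n) / of_nat N) \<longlonglongrightarrow> 0"
    using Lim_null_comparison[OF ev] Rlim by simp
  then show ?thesis unfolding weyl_sums_vanish_def E_def .
qed

section \<open>Fejer's theorem for higher derivatives\<close>

text \<open>\<open>D j\<close> is the j-th derivative of \<open>D 0\<close> for \<open>x \<ge> x0\<close>, and \<open>D (r - 1)\<close> satisfies the
  hypotheses of Fejer's theorem.\<close>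

definition fejer_tower :: "nat \<Rightarrow> (nat \<Rightarrow> real \<Rightarrow> real) \<Rightarrow> real \<Rightarrow> bool" where
  "fejer_tower r D x0 \<longleftrightarrow> r \<ge> 1 \<and>
     (\<forall>j\<le>r. \<forall>x\<ge>x0. (D j has_real_derivative D (Suc j) x) (at x)) \<and>
     ((\<forall>x\<ge>x0. D (Suc r) x \<le> 0) \<or> (\<forall>x\<ge>x0. D (Suc r) x \<ge> 0)) \<and>
     ((\<lambda>n. D r (real n)) \<longlonglongrightarrow> 0) \<and>
     filterlim (\<lambda>n. real n * \<bar>D r (real n)\<bar>) at_top sequentially"

lemma antimono_pos_if_tendsto_0:
  fixes h :: "real \<Rightarrow> real"
  assumes mono: "\<And>x y. lo \<le> x \<Longrightarrow> x \<le> y \<Longrightarrow> h y \<le> h x"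
    and lim: "(\<lambda>n. h (real n)) \<longlonglongrightarrow> 0"
    and inf: "filterlim (\<lambda>n. real n * \<bar>h (real n)\<bar>) at_top sequentially"
    and y: "y \<ge> lo"
  shows "h y > 0"
proof -
  define m where "m = nat \<lceil>y\<rceil>"
  have my: "real m \<ge> y" unfolding m_def by linarith
  have hn: "h (real n) \<ge> 0" if "real n \<ge> lo" for n
  proof -
    have "\<forall>k\<ge>n. h (real k) \<le> h (real n)" using mono that by auto
    then show ?thesis using LIMSEQ_le_const2[OF lim] by blast
  qed
  have hy: "h y \<ge> h (real k)" if "k \<ge> m" for k
  proof -
    have "real m \<le> real k" using that by simp
    then have "y \<le> real k" using my by linarith
    then show ?thesis using mono[of y "real k"] y by blast
  qed
  show ?thesis
  proof (rule ccontr)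
    assume "\<not> h y > 0"
    then have z: "h (real k) = 0" if "k \<ge> m" for k
      using hy[OF that] hn[of k] that y my by (smt (verit) of_nat_le_iff)
    have "eventually (\<lambda>n. real n * \<bar>h (real n)\<bar> > 0) sequentially"
      using inf by (simp add: filterlim_at_top_dense)
    moreover have "eventually (\<lambda>n. n \<ge> m) sequentially" by (rule eventually_ge_at_top)
    ultimately have "eventually (\<lambda>n. False) sequentially"
      by eventually_elim (use z in auto)
    then show False by simp
  qed
qed

lemma fejer_tower_sign:
  assumes "fejer_tower r D x0"
  obtains s :: real where "s = 1 \<or> s = -1"
    and "\<And>x y. x0 \<le> x \<Longrightarrow> x \<le> y \<Longrightarrow> s * D r y \<le> s * D r x"
    and "\<And>x. x \<ge> x0 \<Longrightarrow> s * D r x > 0"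
proof -
  have der: "\<And>x. x \<ge> x0 \<Longrightarrow> (D r has_real_derivative D (Suc r) x) (at x)"
    and sgn: "(\<forall>x\<ge>x0. D (Suc r) x \<le> 0) \<or> (\<forall>x\<ge>x0. D (Suc r) x \<ge> 0)"
    and lim: "(\<lambda>n. D r (real n)) \<longlonglongrightarrow> 0"
    and inf: "filterlim (\<lambda>n. real n * \<bar>D r (real n)\<bar>) at_top sequentially"
    using assms unfolding fejer_tower_def by auto
  obtain s :: real where s: "s = 1 \<or> s = -1"
    and smono: "\<And>x y. x0 \<le> x \<Longrightarrow> x \<le> y \<Longrightarrow> s * D r y \<le> s * D r x"
  proof (cases "\<forall>x\<ge>x0. D (Suc r) x \<le> 0")
    case True
    show ?thesis
    proof (rule that[of 1])
      fix x y assume "x0 \<le> x" "x \<le> y"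
      then show "1 * D r y \<le> 1 * D r x"
        using deriv_nonpos_imp_antimono[of x y "D r" "D (Suc r)"] der True by simp
    qed simp
  next
    case False
    then have "\<forall>x\<ge>x0. D (Suc r) x \<ge> 0"
      using sgn by blast
    show ?thesis
    proof (rule that[of "-1"])
      fix x y assume "x0 \<le> x" "x \<le> y"
      then show "-1 * D r y \<le> -1 * D r x"
        using deriv_nonneg_imp_mono[of x y "D r" "D (Suc r)"] der \<open>\<forall>x\<ge>x0. D (Suc r) x \<ge> 0\<close> by simp
    qed simp
  qed
  have "s * D r x > 0" if "x \<ge> x0" for x
  proof (rule antimono_pos_if_tendsto_0[where h = "\<lambda>x. s * D r x" and lo = x0])
    show "(\<lambda>n. s * D r (real n)) \<longlonglongrightarrow> 0"
      using tendsto_mult[OF tendsto_const lim, of s] by simp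
    show "filterlim (\<lambda>n. real n * \<bar>s * D r (real n)\<bar>) at_top sequentially"
      using inf s by (auto simp: abs_mult)
  qed (use smono that in auto)
  then show ?thesis
    using that s smono by blast
qed

lemma difference_bounds_if_abs_deriv_antimono:
  fixes F F' :: "real \<Rightarrow> real"
  assumes der: "\<And>x. x \<ge> x0 \<Longrightarrow> (F has_real_derivative F' x) (at x)"
    and mono: "\<And>x y. x0 \<le> x \<Longrightarrow> x \<le> y \<Longrightarrow> \<bar>F' y\<bar> \<le> \<bar>F' x\<bar>"
    and x: "x \<ge> x0" and h: "h > 0"
  shows "h * \<bar>F' (x + h)\<bar> \<le> \<bar>F (x + h) - F x\<bar>" and "\<bar>F (x + h) - F x\<bar> \<le> h * \<bar>F' x\<bar>"
proof -
  obtain z where z: "x < z" "z < x + h" "F (x + h) - F x = (x + h - x) * F' z"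
    using MVT2[of x "x + h" F F'] der x h by force
  then have "\<bar>F (x + h) - F x\<bar> = h * \<bar>F' z\<bar>"
    using h by (simp add: abs_mult)
  moreover have "\<bar>F' (x + h)\<bar> \<le> \<bar>F' z\<bar>" "\<bar>F' z\<bar> \<le> \<bar>F' x\<bar>"
    using mono[of z "x + h"] mono[of x z] x z by auto
  ultimately show "h * \<bar>F' (x + h)\<bar> \<le> \<bar>F (x + h) - F x\<bar>" "\<bar>F (x + h) - F x\<bar> \<le> h * \<bar>F' x\<bar>"
    using h by (simp_all add: mult_left_mono)
qed

lemma slow_decay_difference:
  fixes F F' :: "real \<Rightarrow> real" and d :: nat
  assumes bounds: "\<And>x. x \<ge> x0 \<Longrightarrow> real d * \<bar>F' (x + real d)\<bar> \<le> \<bar>F (x + real d) - F x\<bar>"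
      "\<And>x. x \<ge> x0 \<Longrightarrow> \<bar>F (x + real d) - F x\<bar> \<le> real d * \<bar>F' x\<bar>"
    and d: "d \<ge> 1"
    and lim: "(\<lambda>n. F' (real n)) \<longlonglongrightarrow> 0"
    and inf: "filterlim (\<lambda>n. real n * \<bar>F' (real n)\<bar>) at_top sequentially"
  shows "(\<lambda>n. F (real n + real d) - F (real n)) \<longlonglongrightarrow> 0"
    and "filterlim (\<lambda>n. real n * \<bar>F (real n + real d) - F (real n)\<bar>) at_top sequentially"
proof -
  obtain n0 :: nat where n0: "real n0 \<ge> x0"
    using real_arch_simple by blast
  have "eventually (\<lambda>n. norm (F (real n + real d) - F (real n)) \<le> real d * \<bar>F' (real n)\<bar>) sequentially"
    using n0 bounds(2)
    by (intro eventually_sequentiallyI[of n0]) (auto intro: order_trans[of x0 "real n0"])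
  moreover have "(\<lambda>n. real d * \<bar>F' (real n)\<bar>) \<longlonglongrightarrow> 0"
    using tendsto_mult[OF tendsto_const tendsto_rabs_zero[OF lim], of "real d"] by simp
  ultimately show "(\<lambda>n. F (real n + real d) - F (real n)) \<longlonglongrightarrow> 0"
    by (rule Lim_null_comparison)
  have shifted: "filterlim (\<lambda>n. real (n + d) * \<bar>F' (real (n + d))\<bar>) at_top sequentially"
    using filterlim_compose[OF inf filterlim_add_const_nat_at_top] by simp
  have half: "filterlim (\<lambda>n. (1/2) * (real (n + d) * \<bar>F' (real (n + d))\<bar>)) at_top sequentially"
    by (rule filterlim_tendsto_pos_mult_at_top[OF tendsto_const _ shifted]) simp
  have "eventually (\<lambda>n. (1/2) * (real (n + d) * \<bar>F' (real (n + d))\<bar>)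
      \<le> real n * \<bar>F (real n + real d) - F (real n)\<bar>) sequentially"
  proof (rule eventually_sequentiallyI[of "max n0 d"])
    fix n assume n: "max n0 d \<le> n"
    then have x: "real n \<ge> x0"
      using n0 by (meson max.boundedE of_nat_le_iff order_trans)
    have "(1/2) * real (n + d) \<le> real n"
      using n by simp
    then have "(1/2) * (real (n + d) * \<bar>F' (real (n + d))\<bar>) \<le> real n * \<bar>F' (real n + real d)\<bar>"
      using mult_right_mono[OF _ abs_ge_zero, of "(1/2) * real (n + d)" "real n" "F' (real (n + d))"]
      by (simp add: mult.assoc)
    also have "\<dots> \<le> real n * (real d * \<bar>F' (real n + real d)\<bar>)"
      using d by (intro mult_left_mono) (auto simp: mult_le_cancel_right1)
    also have "\<dots> \<le> real n * \<bar>F (real n + real d) - F (real n)\<bar>"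
      using bounds(1)[OF x] by (intro mult_left_mono) auto
    finally show "(1/2) * (real (n + d) * \<bar>F' (real (n + d))\<bar>)
        \<le> real n * \<bar>F (real n + real d) - F (real n)\<bar>" .
  qed
  then show "filterlim (\<lambda>n. real n * \<bar>F (real n + real d) - F (real n)\<bar>) at_top sequentially"
    by (rule filterlim_at_top_mono[OF half])
qed

lemma fejer_tower_difference:
  assumes C: "fejer_tower (Suc r) D x0" and r: "r \<ge> 1" and d: "d \<ge> (1::nat)"
  shows "fejer_tower r (\<lambda>j x. D j (x + real d) - D j x) x0"
proof -
  have der: "\<And>j x. j \<le> Suc r \<Longrightarrow> x \<ge> x0 \<Longrightarrow> (D j has_real_derivative D (Suc j) x) (at x)"
    and lim: "(\<lambda>n. D (Suc r) (real n)) \<longlonglongrightarrow> 0"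
    and inf: "filterlim (\<lambda>n. real n * \<bar>D (Suc r) (real n)\<bar>) at_top sequentially"
    using C unfolding fejer_tower_def by blast+
  obtain s :: real where s: "s = 1 \<or> s = -1"
    and smono: "\<And>x y. x0 \<le> x \<Longrightarrow> x \<le> y \<Longrightarrow> s * D (Suc r) y \<le> s * D (Suc r) x"
    and spos: "\<And>x. x \<ge> x0 \<Longrightarrow> s * D (Suc r) x > 0"
    using fejer_tower_sign[OF C] by metis
  have "\<bar>D (Suc r) x\<bar> = s * D (Suc r) x" if "x \<ge> x0" for x
    using spos[OF that] s by auto
  then have "\<bar>D (Suc r) y\<bar> \<le> \<bar>D (Suc r) x\<bar>" if "x0 \<le> x" "x \<le> y" for x y
    using smono[OF that] that by simp
  then have bounds: "real d * \<bar>D (Suc r) (x + real d)\<bar> \<le> \<bar>D r (x + real d) - D r x\<bar>"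
      "\<bar>D r (x + real d) - D r x\<bar> \<le> real d * \<bar>D (Suc r) x\<bar>" if "x \<ge> x0" for x
    using difference_bounds_if_abs_deriv_antimono[of x0 "D r" "D (Suc r)" x "real d"] der[of r] that d
    by auto
  have "((\<lambda>x. D j (x + real d) - D j x) has_real_derivative D (Suc j) (x + real d) - D (Suc j) x) (at x)"
    if "j \<le> r" "x0 \<le> x" for j x
  proof -
    have "((\<lambda>x. D j (x + real d)) has_real_derivative D (Suc j) (x + real d)) (at x)"
      using der[of j "x + real d"] that by (simp add: DERIV_shift)
    then show ?thesis
      using der[of j x] that by (intro DERIV_diff) auto
  qed
  moreover have "(\<forall>x\<ge>x0. D (Suc r) (x + real d) - D (Suc r) x \<le> 0)
      \<or> (\<forall>x\<ge>x0. D (Suc r) (x + real d) - D (Suc r) x \<ge> 0)"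
    using s smono[of _ "_ + real d"] by force
  ultimately show ?thesis
    unfolding fejer_tower_def using r slow_decay_difference[OF bounds d lim inf] by simp
qed

lemma fejer_tower_1_weyl_sums_vanish:
  assumes C: "fejer_tower 1 D x0"
  shows "weyl_sums_vanish (\<lambda>n. D 0 (real n))"
proof -
  have der: "\<And>x. x \<ge> x0 \<Longrightarrow> (D 0 has_real_derivative D 1 x) (at x)"
    and lim: "(\<lambda>n. D 1 (real n)) \<longlonglongrightarrow> 0"
    and inf: "filterlim (\<lambda>n. real n * \<bar>D 1 (real n)\<bar>) at_top sequentially"
    using C unfolding fejer_tower_def by auto
  obtain s :: real where s: "s = 1 \<or> s = -1"
    and mono: "\<And>x y. x0 \<le> x \<Longrightarrow> x \<le> y \<Longrightarrow> s * D 1 y \<le> s * D 1 x"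
    and pos: "\<And>x. x \<ge> x0 \<Longrightarrow> s * D 1 x > 0"
    using fejer_tower_sign[OF C] by metis
  define a where "a = nat \<lceil>x0\<rceil>"
  have a: "real a \<ge> x0"
    unfolding a_def by linarith
  have "weyl_sums_vanish (\<lambda>n. s * D 0 (real n))"
  proof (rule fejer_weyl_sums_vanish[where f' = "\<lambda>x. s * D 1 x" and a = a])
    show "((\<lambda>x. s * D 0 x) has_real_derivative s * D 1 x) (at x)" if "real a \<le> x" for x
      using der a that by (auto intro: DERIV_cmult)
    show "(\<lambda>n. s * D 1 (real n)) \<longlonglongrightarrow> 0"
      using tendsto_mult[OF tendsto_const lim, of s] by simp
    have "\<bar>D 1 (real n)\<bar> = s * D 1 (real n)" if "n \<ge> a" for n
      using pos[of "real n"] s that a by force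
    then have "eventually (\<lambda>n. real n * \<bar>D 1 (real n)\<bar> \<le> real n * (s * D 1 (real n))) sequentially"
      by (intro eventually_sequentiallyI[of a]) simp
    then show "filterlim (\<lambda>n. real n * (s * D 1 (real n))) at_top sequentially"
      by (rule filterlim_at_top_mono[OF inf])
  qed (use mono pos a in auto)
  then show ?thesis
    using s weyl_sums_vanish_uminus[of "\<lambda>n. - D 0 (real n)"] by auto
qed

lemma fejer_tower_weyl_sums_vanish:
  assumes "fejer_tower r D x0"
  shows "weyl_sums_vanish (\<lambda>n. D 0 (real n))"
  using assms
proof (induction r arbitrary: D)
  case 0
  then show ?case by (simp add: fejer_tower_def)
next
  case (Suc r)
  show ?case
  proof (cases "r = 0")
    case True
    then show ?thesis using fejer_tower_1_weyl_sums_vanish Suc.prems by simp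
  next
    case False
    then have r1: "r \<ge> 1" by simp
    show ?thesis
    proof (rule van_der_Corput_difference)
      fix d :: nat assume d: "d \<ge> 1"
      have "weyl_sums_vanish (\<lambda>n. D 0 (real n + real d) - D 0 (real n))"
        using Suc.IH[OF fejer_tower_difference[OF Suc.prems r1 d]] by simp
      then show "weyl_sums_vanish (\<lambda>n. D 0 (real (n + d)) - D 0 (real n))" by simp
    qed
  qed
qed

section \<open>Shifted power sums\<close>

lemma tendsto_taylor_quotient_at_right_0:
  fixes diff :: "nat \<Rightarrow> real \<Rightarrow> real"
  assumes deriv: "\<And>m t. t \<ge> 0 \<Longrightarrow> (diff m has_real_derivative diff (Suc m) t) (at t)"
    and vanish: "\<And>m. m < n \<Longrightarrow> diff m 0 = 0"
  shows "((\<lambda>t. diff 0 t / t ^ n) \<longlongrightarrow> diff n 0 / fact n) (at_right 0)"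
proof -
  have "continuous_on {0..1} (diff (Suc n))"
    using deriv by (intro continuous_at_imp_continuous_on ballI DERIV_isCont) auto
  then obtain B where B: "\<And>s. s \<in> {0..1} \<Longrightarrow> \<bar>diff (Suc n) s\<bar> \<le> B"
    using continuous_on_compact_bound[OF compact_Icc] by (metis real_norm_def)
  have "\<bar>diff 0 t / t ^ n - diff n 0 / fact n\<bar> \<le> B / fact (Suc n) * t" if t: "0 < t" "t < 1" for t
  proof -
    obtain s where s: "0 < s" "s < t"
      "diff 0 t = (\<Sum>m<Suc n. diff m 0 / fact m * t ^ m) + diff (Suc n) s / fact (Suc n) * t ^ Suc n"
      using Maclaurin[of t "Suc n" diff "diff 0"] deriv t by auto
    have "(\<Sum>m<Suc n. diff m 0 / fact m * t ^ m) = diff n 0 / fact n * t ^ n"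
      by (simp add: vanish)
    with s(3) have "diff 0 t = (diff n 0 / fact n + diff (Suc n) s / fact (Suc n) * t) * t ^ n"
      by (simp add: algebra_simps)
    then have "diff 0 t / t ^ n - diff n 0 / fact n = diff (Suc n) s / fact (Suc n) * t"
      using t by simp
    moreover have "\<bar>diff (Suc n) s\<bar> \<le> B"
      using B s t by simp
    ultimately show ?thesis
      using t by (simp add: abs_mult divide_right_mono mult_right_mono)
  qed
  then have "eventually (\<lambda>t. norm (diff 0 t / t ^ n - diff n 0 / fact n) \<le> B / fact (Suc n) * t)
      (at_right 0)"
    unfolding eventually_at_right_field by (intro exI[of _ 1]) auto
  moreover have "((\<lambda>t. B / fact (Suc n) * t) \<longlongrightarrow> 0) (at_right 0)"
    using tendsto_mult[OF tendsto_const tendsto_ident_at, of "B / fact (Suc n)" 0 "{0<..}"] by simp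
  ultimately have "((\<lambda>t. diff 0 t / t ^ n - diff n 0 / fact n) \<longlongrightarrow> 0) (at_right 0)"
    by (rule Lim_null_comparison)
  then show ?thesis
    by (simp add: LIM_zero_iff)
qed

lemma filterlim_powr_at_top:
  assumes "s > 0"
  shows "filterlim (\<lambda>x::real. x powr s) at_top at_top"
proof -
  have "((\<lambda>x::real. x powr (- s)) \<longlongrightarrow> 0) at_top"
    using assms by (intro tendsto_neg_powr filterlim_ident) auto
  moreover have "eventually (\<lambda>x::real. 0 < x powr (- s)) at_top"
    using eventually_gt_at_top[of "0::real"] by eventually_elim simp
  ultimately have "filterlim (\<lambda>x::real. inverse (x powr (- s))) at_top at_top"
    by (rule filterlim_inverse_at_top)
  then show ?thesis
    by (simp add: powr_minus)
qed

lemma eventually_constant_sign_if_powr_asymptotic: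
  fixes f :: "real \<Rightarrow> real"
  assumes lim: "((\<lambda>x. x powr a * f x) \<longlongrightarrow> K) at_top" and "K \<noteq> 0"
  obtains X where "(\<forall>x\<ge>X. f x \<le> 0) \<or> (\<forall>x\<ge>X. f x \<ge> 0)"
proof (cases "K > 0")
  case True
  have "eventually (\<lambda>x. x powr a * f x > 0) at_top"
    using lim True by (rule order_tendstoD(1))
  then have "eventually (\<lambda>x. f x \<ge> 0) at_top"
    using eventually_gt_at_top[of "0::real"] by eventually_elim (simp add: zero_less_mult_iff)
  then show ?thesis
    using that by (auto simp: eventually_at_top_linorder)
next
  case False
  then have "K < 0"
    using \<open>K \<noteq> 0\<close> by simp
  have "eventually (\<lambda>x. x powr a * f x < 0) at_top"
    using lim \<open>K < 0\<close> by (rule order_tendstoD(2))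
  then have "eventually (\<lambda>x. f x \<le> 0) at_top"
    using eventually_gt_at_top[of "0::real"] by eventually_elim (simp add: mult_less_0_iff)
  then show ?thesis
    using that by (auto simp: eventually_at_top_linorder)
qed

lemma slow_decay_if_powr_asymptotic:
  fixes f :: "real \<Rightarrow> real"
  assumes lim: "((\<lambda>x. x powr a * f x) \<longlongrightarrow> K) at_top" and "K \<noteq> 0" and "0 < a" "a < 1"
  shows "(f \<longlongrightarrow> 0) at_top" and "filterlim (\<lambda>x. x * \<bar>f x\<bar>) at_top at_top"
proof -
  have "((\<lambda>x. x powr (- a) * (x powr a * f x)) \<longlongrightarrow> 0 * K) at_top"
    using \<open>0 < a\<close> by (intro tendsto_mult lim tendsto_neg_powr filterlim_ident) auto
  moreover have "eventually (\<lambda>x. x powr (- a) * (x powr a * f x) = f x) at_top"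
    using eventually_gt_at_top[of "0::real"]
    by eventually_elim (simp add: mult.assoc[symmetric] powr_add[symmetric])
  ultimately show "(f \<longlongrightarrow> 0) at_top"
    by (simp add: tendsto_cong)
  have "filterlim (\<lambda>x. \<bar>x powr a * f x\<bar> * x powr (1 - a)) at_top at_top"
    using \<open>K \<noteq> 0\<close> \<open>a < 1\<close>
    by (intro filterlim_tendsto_pos_mult_at_top[OF tendsto_rabs[OF lim]] filterlim_powr_at_top) auto
  moreover have "eventually (\<lambda>x. \<bar>x powr a * f x\<bar> * x powr (1 - a) = x * \<bar>f x\<bar>) at_top"
    using eventually_gt_at_top[of "0::real"]
  proof eventually_elim
    case (elim x)
    have "\<bar>x powr a * f x\<bar> * x powr (1 - a) = (x powr a * x powr (1 - a)) * \<bar>f x\<bar>"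
      using elim by (simp add: abs_mult)
    also have "x powr a * x powr (1 - a) = x"
      using elim by (simp add: powr_add[symmetric])
    finally show ?case .
  qed
  ultimately show "filterlim (\<lambda>x. x * \<bar>f x\<bar>) at_top at_top"
    using filterlim_cong by fastforce
qed

definition ffact :: "real \<Rightarrow> nat \<Rightarrow> real" where
  "ffact b j = (\<Prod>t<j. b - real t)"

lemma ffact_0 [simp]: "ffact b 0 = 1"
  by (simp add: ffact_def)

lemma ffact_Suc: "ffact b (Suc j) = ffact b j * (b - real j)"
  by (simp add: ffact_def)

lemma diff_of_nat_notin_Ints:
  assumes "c \<notin> \<int>"
  shows "c - real j \<notin> \<int>"
  using assms Ints_add[of "c - real j" "real j"] by auto

lemma ffact_nonzero:
  assumes "b \<notin> \<int>"
  shows "ffact b j \<noteq> 0"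
  using diff_of_nat_notin_Ints[OF assms] unfolding ffact_def by (auto simp: prod_zero_iff)

lemma vandermonde_moment_nonzero:
  fixes w :: "nat \<Rightarrow> real"
  assumes i0: "i0 < k" and wi0: "w i0 \<noteq> 0"
  shows "\<exists>j<k. (\<Sum>i<k. w i * real i ^ j) \<noteq> 0"
proof (rule ccontr)
  assume "\<not> ?thesis"
  then have V0: "\<And>j. j < k \<Longrightarrow> (\<Sum>i<k. w i * real i ^ j) = 0" by auto
  define p :: "real poly" where "p = (\<Prod>t\<in>{..<k} - {i0}. [:- real t, 1:])"
  have "degree p \<le> (\<Sum>t\<in>{..<k} - {i0}. degree [:- real t, (1::real):])"
    unfolding p_def using degree_prod_sum_le[of "{..<k} - {i0}" "\<lambda>t. [:- real t, (1::real):]"]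
    by (simp add: o_def)
  also have "\<dots> = card ({..<k} - {i0})" by simp
  also have "\<dots> = k - 1" using i0 by simp
  finally have degp: "degree p < k" using i0 by simp
  have "(\<Sum>i<k. w i * poly p (real i)) = (\<Sum>i<k. \<Sum>j\<le>degree p. w i * (coeff p j * real i ^ j))"
    unfolding poly_altdef by (simp add: sum_distrib_left)
  also have "\<dots> = (\<Sum>j\<le>degree p. coeff p j * (\<Sum>i<k. w i * real i ^ j))"
    by (subst sum.swap) (simp add: sum_distrib_left algebra_simps)
  also have "\<dots> = 0" using degp V0 by (intro sum.neutral) auto
  finally have S0: "(\<Sum>i<k. w i * poly p (real i)) = 0" .
  have pz: "poly p (real i) = 0" if "i < k" "i \<noteq> i0" for i
  proof -
    have "i \<in> {..<k} - {i0}" using that by simp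
    then show ?thesis unfolding p_def poly_prod
      by (intro prod_zero) (auto intro!: bexI[of _ i])
  qed
  have pnz: "poly p (real i0) \<noteq> 0"
    unfolding p_def poly_prod by (simp add: prod_zero_iff)
  have "(\<Sum>i<k. w i * poly p (real i))
      = w i0 * poly p (real i0) + (\<Sum>i\<in>{..<k} - {i0}. w i * poly p (real i))"
    using i0 by (subst sum.remove[of "{..<k}" i0]) auto
  also have "(\<Sum>i\<in>{..<k} - {i0}. w i * poly p (real i)) = 0"
    using pz by (intro sum.neutral) auto
  finally have "(\<Sum>i<k. w i * poly p (real i)) = w i0 * poly p (real i0)" by simp
  then show False using S0 wi0 pnz by simp
qed

definition shifted_powr_sum :: "(nat \<Rightarrow> real) \<Rightarrow> nat \<Rightarrow> real \<Rightarrow> real \<Rightarrow> real" where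
  "shifted_powr_sum w k b x = (\<Sum>i<k. w i * (x + real i) powr b)"

lemma has_real_derivative_shifted_powr_sum:
  assumes "x > 0"
  shows "(shifted_powr_sum w k b has_real_derivative b * shifted_powr_sum w k (b - 1) x) (at x)"
proof -
  have "((\<lambda>x. (x + real i) powr b) has_real_derivative b * (x + real i) powr (b - 1)) (at x)" for i
    using assms by (auto intro!: derivative_eq_intros)
  then have "((\<lambda>x. \<Sum>i<k. w i * (x + real i) powr b) has_real_derivative
      (\<Sum>i<k. w i * (b * (x + real i) powr (b - 1)))) (at x)"
    by (intro DERIV_sum DERIV_cmult)
  then show ?thesis
    unfolding shifted_powr_sum_def by (simp add: sum_distrib_left algebra_simps)
qed

lemma shifted_powr_sum_asymptotic:
  fixes b :: real and w :: "nat \<Rightarrow> real" and k jz :: nat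
  assumes moments: "\<And>j. j < jz \<Longrightarrow> (\<Sum>i<k. w i * real i ^ j) = 0"
  shows "((\<lambda>x. x powr (real jz - b) * shifted_powr_sum w k b x)
          \<longlongrightarrow> ffact b jz * (\<Sum>i<k. w i * real i ^ jz) / fact jz) at_top"
proof -
  \<comment> \<open>\<open>diff m\<close> is the m-th derivative of t \<mapsto> \<Sum>i<k. w i * (1 + i t) powr b, which is
      x powr (- b) * shifted_powr_sum w k b x at t = 1 / x\<close>
  define diff where
    "diff m t = ffact b m * (\<Sum>i<k. w i * real i ^ m * (1 + real i * t) powr (b - real m))"
    for m t
  have "(diff m has_real_derivative diff (Suc m) t) (at t)" if "t \<ge> 0" for m t
  proof -
    have "((\<lambda>t. (1 + real i * t) powr (b - real m)) has_real_derivative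
        (b - real m) * (1 + real i * t) powr (b - real m - 1) * real i) (at t)" for i
      using that by (auto intro!: derivative_eq_intros add_pos_nonneg)
    then have "(diff m has_real_derivative
        ffact b m
          * (\<Sum>i<k. w i * real i ^ m * ((b - real m) * (1 + real i * t) powr (b - real m - 1) * real i)))
        (at t)"
      unfolding diff_def by (intro DERIV_cmult DERIV_sum) auto
    then show ?thesis
      unfolding diff_def by (simp add: ffact_Suc sum_distrib_left algebra_simps)
  qed
  moreover have "diff m 0 = ffact b m * (\<Sum>i<k. w i * real i ^ m)" for m
    unfolding diff_def by simp
  ultimately have "((\<lambda>t. diff 0 t / t ^ jz) \<longlongrightarrow> ffact b jz * (\<Sum>i<k. w i * real i ^ jz) / fact jz)
      (at_right 0)"
    using tendsto_taylor_quotient_at_right_0[of diff jz] moments by simp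
  then have "((\<lambda>x. diff 0 (inverse x) / inverse x ^ jz)
      \<longlongrightarrow> ffact b jz * (\<Sum>i<k. w i * real i ^ jz) / fact jz) at_top"
    by (rule filterlim_compose[OF _ filterlim_inverse_at_right_top])
  moreover have "eventually (\<lambda>x. diff 0 (inverse x) / inverse x ^ jz
      = x powr (real jz - b) * shifted_powr_sum w k b x) at_top"
    using eventually_gt_at_top[of "0::real"]
  proof eventually_elim
    case (elim x)
    have "(x + real i) powr b = x powr b * (1 + real i * inverse x) powr b" for i
    proof -
      have "x + real i = x * (1 + real i * inverse x)"
        using elim by (simp add: field_simps)
      then have "(x + real i) powr b = (x * (1 + real i * inverse x)) powr b"
        by simp
      also have "\<dots> = x powr b * (1 + real i * inverse x) powr b"
        using elim by (simp add: powr_mult)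
      finally show ?thesis .
    qed
    then have "shifted_powr_sum w k b x = x powr b * diff 0 (inverse x)"
      unfolding shifted_powr_sum_def diff_def by (simp add: sum_distrib_left mult_ac)
    moreover have "x powr (real jz - b) * x powr b = x ^ jz"
      using elim by (simp add: powr_add[symmetric] powr_realpow)
    ultimately show ?case
      using elim by (simp add: power_inverse field_simps)
  qed
  ultimately show ?thesis
    by (rule Lim_transform_eventually)
qed

lemma fejer_tower_shifted_powr_sum:
  fixes c :: real and w :: "nat \<Rightarrow> real"
  assumes c: "c \<notin> \<int>" and moments: "\<And>j. j < jz \<Longrightarrow> (\<Sum>i<k. w i * real i ^ j) = 0"
    and moment_jz: "(\<Sum>i<k. w i * real i ^ jz) \<noteq> 0"
    and r: "r \<ge> 1" and jzr: "c < real (jz + r)" "real (jz + r) < c + 1"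
  obtains x0 where "fejer_tower r (\<lambda>j x. ffact c j * shifted_powr_sum w k (c - real j) x) x0"
proof -
  define D where "D j x = ffact c j * shifted_powr_sum w k (c - real j) x" for j x
  have deriv: "(D j has_real_derivative D (Suc j) x) (at x)" if "x > 0" for j x
  proof -
    have "(D j has_real_derivative
        ffact c j * ((c - real j) * shifted_powr_sum w k (c - real j - 1) x)) (at x)"
      unfolding D_def by (intro DERIV_cmult has_real_derivative_shifted_powr_sum that)
    moreover have "ffact c j * ((c - real j) * shifted_powr_sum w k (c - real j - 1) x) = D (Suc j) x"
      unfolding D_def by (simp add: ffact_Suc algebra_simps)
    ultimately show ?thesis
      by simp
  qed
  define K where "K j = ffact c j * (ffact (c - real j) jz * (\<Sum>i<k. w i * real i ^ jz) / fact jz)" for j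
  have K: "K j \<noteq> 0" for j
    unfolding K_def using ffact_nonzero[OF c] ffact_nonzero[OF diff_of_nat_notin_Ints[OF c]] moment_jz
    by simp
  have asym: "((\<lambda>x. x powr (real (jz + j) - c) * D j x) \<longlongrightarrow> K j) at_top" for j
  proof -
    have "((\<lambda>x. ffact c j * (x powr (real jz - (c - real j)) * shifted_powr_sum w k (c - real j) x))
        \<longlongrightarrow> K j) at_top"
      unfolding K_def by (intro tendsto_mult tendsto_const shifted_powr_sum_asymptotic moments)
    then show ?thesis
      unfolding D_def by (simp add: algebra_simps)
  qed
  define a where "a = real (jz + r) - c"
  have a: "0 < a" "a < 1"
    using jzr unfolding a_def by auto
  have lim0: "(D r \<longlongrightarrow> 0) at_top" and inf: "filterlim (\<lambda>x. x * \<bar>D r x\<bar>) at_top at_top"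
    using slow_decay_if_powr_asymptotic[OF asym[of r, folded a_def] K a] by blast+
  obtain X where X: "(\<forall>x\<ge>X. D (Suc r) x \<le> 0) \<or> (\<forall>x\<ge>X. D (Suc r) x \<ge> 0)"
    using eventually_constant_sign_if_powr_asymptotic[OF asym[of "Suc r"] K] by blast
  have "fejer_tower r D (max 1 X)"
    unfolding fejer_tower_def
  proof (intro conjI)
    show "\<forall>j\<le>r. \<forall>x\<ge>max 1 X. (D j has_real_derivative D (Suc j) x) (at x)"
      using deriv by auto
    show "(\<forall>x\<ge>max 1 X. D (Suc r) x \<le> 0) \<or> (\<forall>x\<ge>max 1 X. 0 \<le> D (Suc r) x)"
      using X by auto
    show "(\<lambda>n. D r (real n)) \<longlonglongrightarrow> 0"
      using filterlim_compose[OF lim0 filterlim_real_sequentially] .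
    show "filterlim (\<lambda>n. real n * \<bar>D r (real n)\<bar>) at_top sequentially"
      using filterlim_compose[OF inf filterlim_real_sequentially] .
  qed (use r in auto)
  then show ?thesis
    using that unfolding D_def by blast
qed

theorem weyl_sums_vanish_shifted_powers:
  fixes c :: real and w :: "nat \<Rightarrow> real"
  assumes c: "c \<notin> \<int>" and k: "real k \<le> c + 1" and w: "i0 < k" "w i0 \<noteq> 0"
  shows "weyl_sums_vanish (\<lambda>n. \<Sum>i<k. w i * real (n + i) powr c)"
proof -
  define V where "V j = (\<Sum>i<k. w i * real i ^ j)" for j
  define jz where "jz = (LEAST j. V j \<noteq> 0)"
  obtain j1 where j1: "j1 < k" "V j1 \<noteq> 0"
    using vandermonde_moment_nonzero[of i0 k w] w unfolding V_def by blast
  have V_jz: "V jz \<noteq> 0"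
    unfolding jz_def using j1(2) by (rule LeastI)
  have V_below: "V j = 0" if "j < jz" for j
    using that not_less_Least unfolding jz_def by blast
  have "jz \<le> j1"
    unfolding jz_def using j1(2) by (rule Least_le)
  then have "real jz \<le> c"
    using j1(1) k by linarith
  moreover have "real jz \<noteq> c"
    using c by (metis Ints_of_nat)
  ultimately have "real jz < c"
    by simp
  moreover have "c < of_int \<lceil>c\<rceil>"
    using c by (metis Ints_of_int le_of_int_ceiling order_le_less)
  ultimately have jz_ceil: "int jz < \<lceil>c\<rceil>"
    by linarith
  define r where "r = nat \<lceil>c\<rceil> - jz"
  have "real (jz + r) = of_int \<lceil>c\<rceil>"
    unfolding r_def using jz_ceil by simp
  then have "c < real (jz + r)" "real (jz + r) < c + 1"
    using \<open>c < of_int \<lceil>c\<rceil>\<close> by linarith+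
  moreover have "r \<ge> 1"
    unfolding r_def using jz_ceil by simp
  ultimately obtain x0 where
    "fejer_tower r (\<lambda>j x. ffact c j * shifted_powr_sum w k (c - real j) x) x0"
    using fejer_tower_shifted_powr_sum[OF c, where jz = jz and k = k and w = w and r = r] V_below V_jz
    unfolding V_def
    by blast
  from fejer_tower_weyl_sums_vanish[OF this] show ?thesis
    by (simp add: shifted_powr_sum_def add.commute)
qed

section \<open>Trigonometric polynomials\<close>

lemma of_real_cos_e2pi: "complex_of_real (cos (2 * pi * y)) = (e2pi y + inverse (e2pi y)) / 2"
  by (simp add: e2pi_def complex_eq_iff)

lemma sum_e2pi_grid:
  fixes h :: int and M :: nat
  assumes M: "M > 0" and hM: "\<bar>h\<bar> < int M"
  shows "(\<Sum>j<M. e2pi (of_int h * real j / real M)) = (if h = 0 then of_nat M else 0)"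
proof (cases "h = 0")
  case True
  then show ?thesis by simp
next
  case False
  define z where "z = e2pi (of_int h / real M)"
  have zj: "e2pi (of_int h * real j / real M) = z ^ j" for j
    unfolding z_def e2pi_power by (simp add: algebra_simps)
  have "z ^ M = 1"
    using zj[of M] M by simp
  moreover have "z \<noteq> 1"
  proof
    assume "z = 1"
    then have "cos (2 * pi * (of_int h / real M)) = 1"
      unfolding z_def e2pi_def by (metis cis.sel(1) one_complex.sel(1))
    then obtain n :: int where "2 * pi * (of_int h / real M) = of_int n * 2 * pi"
      by (auto simp: cos_one_2pi_int)
    then have "of_int h = of_int n * real M"
      using M by (simp add: field_simps)
    then have "h = n * int M"
      by (metis of_int_eq_iff of_int_mult of_int_of_nat_eq)
    then show False
      using hM False by (auto simp: abs_mult)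
  qed
  ultimately have "(\<Sum>j<M. z ^ j) = 0"
    by (simp add: sum_gp_strict)
  then show ?thesis
    using False by (simp add: zj)
qed

text \<open>If \<open>degree p \<le> 2 * Q\<close>, then \<open>trig_poly Q p\<close> has frequencies in \<open>{-Q..Q}\<close> and constant
  term \<open>coeff p Q\<close>.\<close>

definition trig_poly :: "nat \<Rightarrow> complex poly \<Rightarrow> real \<Rightarrow> complex" where
  "trig_poly Q p y = e2pi (- (real Q * y)) * poly p (e2pi y)"

lemma trig_poly_eq_sum:
  assumes "degree p \<le> 2 * Q"
  shows "trig_poly Q p y = (\<Sum>j\<le>2 * Q. coeff p j * e2pi (of_int (int j - int Q) * y))"
proof -
  have "poly p (e2pi y) = (\<Sum>j\<le>2 * Q. coeff p j * e2pi y ^ j)"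
    unfolding poly_altdef using assms by (intro sum.mono_neutral_left) (auto simp: coeff_eq_0)
  moreover have "e2pi (- (real Q * y)) * e2pi y ^ j = e2pi (of_int (int j - int Q) * y)" for j
    by (simp add: e2pi_power algebra_simps flip: e2pi_add)
  ultimately show ?thesis
    unfolding trig_poly_def by (simp add: sum_distrib_left mult.left_commute)
qed

lemma trig_poly_add_monom: "trig_poly Q (p + monom c Q) y = trig_poly Q p y + c"
proof -
  have "e2pi (- (real Q * y)) * e2pi y ^ Q = 1"
    by (simp add: e2pi_power flip: e2pi_add)
  then show ?thesis
    unfolding trig_poly_def by (simp add: poly_monom distrib_left mult.left_commute)
qed

lemma trig_poly_grid_mean:
  assumes "degree p \<le> 2 * Q" and "2 * Q < M"
  shows "(\<Sum>j<M. trig_poly Q p (real j / real M)) / of_nat M = coeff p Q"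
proof -
  have "(\<Sum>j<M. trig_poly Q p (real j / real M))
      = (\<Sum>i\<le>2 * Q. coeff p i * (\<Sum>j<M. e2pi (of_int (int i - int Q) * real j / real M)))"
    unfolding trig_poly_eq_sum[OF assms(1)] sum_distrib_left
    by (subst sum.swap) (simp add: mult.assoc)
  also have "\<dots> = (\<Sum>i\<le>2 * Q. coeff p i * (if i = Q then of_nat M else 0))"
    using assms(2) by (intro sum.cong refl) (subst sum_e2pi_grid, auto)
  also have "\<dots> = coeff p Q * of_nat M"
    by (simp add: if_distrib sum.delta cong: if_cong)
  finally show ?thesis
    using assms(2) by simp
qed

lemma cos_power_sum_eq_trig_poly:
  fixes a :: "nat \<Rightarrow> real"
  obtains p where "degree p \<le> 2 * n"
    and "\<And>y. complex_of_real (\<Sum>i\<le>n. a i * cos (2 * pi * y) ^ i) = trig_poly n p y"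
proof
  \<comment> \<open>with z = e2pi y: z ^ (n - i) * poly C z ^ i = z ^ n * cos (2 * pi * y) ^ i\<close>
  define C :: "complex poly" where "C = [:1/2, 0, 1/2:]"
  define p where "p = (\<Sum>i\<le>n. smult (of_real (a i)) (monom 1 (n - i) * C ^ i))"
  show "degree p \<le> 2 * n"
    unfolding p_def
  proof (intro degree_sum_le)
    fix i assume i: "i \<in> {..n}"
    have "degree (monom (1::complex) (n - i) * C ^ i) \<le> (n - i) + 2 * i"
      using degree_mult_le[of "monom (1::complex) (n - i)" "C ^ i"]
        degree_monom_le[of "1::complex" "n - i"]
        degree_power_le[of C i]
      by (simp add: C_def mult.commute)
    then show "degree (smult (of_real (a i)) (monom 1 (n - i) * C ^ i)) \<le> 2 * n"
      using i degree_smult_le[of "of_real (a i)" "monom 1 (n - i) * C ^ i"] by simp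
  qed simp
  fix y
  define z where "z = e2pi y"
  have z: "z \<noteq> 0"
    unfolding z_def e2pi_def by simp
  have pointwise: "inverse z ^ n * (z ^ (n - i) * poly C z ^ i) = complex_of_real (cos (2 * pi * y)) ^ i"
    if "i \<le> n" for i
  proof -
    have "inverse z ^ n * z ^ (n - i) = inverse z ^ i"
      using that z by (simp add: power_diff field_simps)
    moreover have "inverse z * poly C z = complex_of_real (cos (2 * pi * y))"
      unfolding of_real_cos_e2pi z_def[symmetric] C_def using z
      by (simp add: field_simps power2_eq_square)
    ultimately show ?thesis
      by (metis mult.assoc power_mult_distrib)
  qed
  have "e2pi (- (real n * y)) = inverse z ^ n"
    unfolding z_def by (simp add: e2pi_uminus_inverse e2pi_power power_inverse)
  then have "trig_poly n p y
      = (\<Sum>i\<le>n. of_real (a i) * (inverse z ^ n * (z ^ (n - i) * poly C z ^ i)))"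
    unfolding trig_poly_def p_def poly_sum z_def[symmetric]
    by (simp add: poly_monom sum_distrib_left mult_ac)
  also have "\<dots> = (\<Sum>i\<le>n. of_real (a i) * complex_of_real (cos (2 * pi * y)) ^ i)"
    using pointwise by (intro sum.cong) auto
  finally show "complex_of_real (\<Sum>i\<le>n. a i * cos (2 * pi * y) ^ i) = trig_poly n p y"
    by simp
qed

lemma trig_poly_approx_of_cos:
  assumes "continuous_on {-1..1} \<phi>" and "e > 0"
  obtains p Q g where "degree p \<le> 2 * Q"
    and "\<And>y. trig_poly Q p y = complex_of_real (g (cos (2 * pi * y)))"
    and "\<And>x. x \<in> {-1..1} \<Longrightarrow> \<bar>\<phi> x - g x\<bar> < e"
proof -
  obtain g where "polynomial_function g" and g: "\<And>x. x \<in> {-1..1} \<Longrightarrow> \<bar>\<phi> x - g x\<bar> < e"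
    using Stone_Weierstrass_polynomial_function[OF compact_Icc assms] by auto
  then obtain a n where "g = (\<lambda>x. \<Sum>i\<le>n. a i * x ^ i)"
    by (auto simp: real_polynomial_function_eq[symmetric] real_polynomial_function_iff_sum)
  moreover obtain p where "degree p \<le> 2 * n"
    and "\<And>y. complex_of_real (\<Sum>i\<le>n. a i * cos (2 * pi * y) ^ i) = trig_poly n p y"
    using cos_power_sum_eq_trig_poly[where a = a and n = n] by blast
  ultimately show ?thesis
    using that g by metis
qed

lemma tendsto_avg_prod_trig_sums:
  fixes y :: "nat \<Rightarrow> nat \<Rightarrow> real" and a :: "nat \<Rightarrow> 'j \<Rightarrow> complex" and \<phi> :: "'j \<Rightarrow> int"
  assumes J: "finite J"
    and weyl: "\<And>h. (\<exists>i<k. h i \<noteq> 0) \<Longrightarrow> weyl_sums_vanish (\<lambda>n. \<Sum>i<k. of_int (h i) * y i n)"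
  shows "(\<lambda>N. (\<Sum>n<N. \<Prod>i<k. \<Sum>j\<in>J. a i j * e2pi (of_int (\<phi> j) * y i n)) / of_nat N)
    \<longlonglongrightarrow> (\<Prod>i<k. \<Sum>j\<in>{j\<in>J. \<phi> j = 0}. a i j)"
proof -
  define G where "G = PiE {..<k} (\<lambda>_. J)"
  define c where "c g = (\<Prod>i<k. a i (g i))" for g
  define avg where "avg g N = (\<Sum>n<N. e2pi (\<Sum>i<k. of_int (\<phi> (g i)) * y i n)) / of_nat N" for g N
  have G: "finite G"
    unfolding G_def using J by (simp add: finite_PiE)
  have expand: "(\<Sum>n<N. \<Prod>i<k. \<Sum>j\<in>J. a i j * e2pi (of_int (\<phi> j) * y i n)) / of_nat N
      = (\<Sum>g\<in>G. c g * avg g N)" for N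
  proof -
    have "(\<Prod>i<k. \<Sum>j\<in>J. a i j * e2pi (of_int (\<phi> j) * y i n))
        = (\<Sum>g\<in>G. c g * e2pi (\<Sum>i<k. of_int (\<phi> (g i)) * y i n))" for n
      unfolding G_def c_def using J by (simp add: prod_sum_PiE prod.distrib e2pi_sum)
    then show ?thesis
      unfolding avg_def by (simp add: sum.swap[of _ G] sum_distrib_left sum_divide_distrib)
  qed
  have lim: "(\<lambda>N. c g * avg g N) \<longlonglongrightarrow> (if \<forall>i<k. \<phi> (g i) = 0 then c g else 0)" for g
  proof (cases "\<forall>i<k. \<phi> (g i) = 0")
    case True
    have "eventually (\<lambda>N. c g * avg g N = c g) sequentially"
      using eventually_gt_at_top[of "0::nat"] by eventually_elim (simp add: avg_def True)
    then show ?thesis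
      using True by (simp add: tendsto_eventually)
  next
    case False
    then have "weyl_sums_vanish (\<lambda>n. \<Sum>i<k. of_int (\<phi> (g i)) * y i n)"
      by (intro weyl) auto
    then have "avg g \<longlonglongrightarrow> 0"
      unfolding weyl_sums_vanish_def avg_def .
    then show ?thesis
      unfolding if_not_P[OF False] by (rule tendsto_mult_right_zero)
  qed
  have "{g \<in> G. \<forall>i<k. \<phi> (g i) = 0} = PiE {..<k} (\<lambda>_. {j \<in> J. \<phi> j = 0})"
    unfolding G_def by (auto simp: PiE_def Pi_def)
  then have "(\<Sum>g\<in>G. if \<forall>i<k. \<phi> (g i) = 0 then c g else 0)
      = (\<Sum>g\<in>PiE {..<k} (\<lambda>_. {j \<in> J. \<phi> j = 0}). c g)"
    using G by (simp add: sum.inter_filter[symmetric])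
  also have "\<dots> = (\<Prod>i<k. \<Sum>j\<in>{j\<in>J. \<phi> j = 0}. a i j)"
    unfolding c_def using J by (simp add: prod_sum_PiE)
  finally have limit: "(\<Sum>g\<in>G. if \<forall>i<k. \<phi> (g i) = 0 then c g else 0)
      = (\<Prod>i<k. \<Sum>j\<in>{j\<in>J. \<phi> j = 0}. a i j)" .
  have "(\<lambda>N. \<Sum>g\<in>G. c g * avg g N) \<longlonglongrightarrow> (\<Sum>g\<in>G. if \<forall>i<k. \<phi> (g i) = 0 then c g else 0)"
    by (rule tendsto_sum) (rule lim)
  then show ?thesis
    unfolding expand limit .
qed

lemma tendsto_avg_prod_shifted_trig_poly:
  fixes y :: "nat \<Rightarrow> nat \<Rightarrow> real" and s :: "nat \<Rightarrow> real" and P :: "real \<Rightarrow> real"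
  assumes deg: "degree p \<le> 2 * Q" and pP: "\<And>t. trig_poly Q p t = complex_of_real (P t)"
    and P0: "\<And>t. P t \<ge> 0"
    and weyl: "\<And>h. (\<exists>i<k. h i \<noteq> 0) \<Longrightarrow> weyl_sums_vanish (\<lambda>n. \<Sum>i<k. of_int (h i) * y i n)"
  shows "(\<lambda>N. (\<Sum>n<N. \<Prod>i<k. P (y i n + s i)) / real N) \<longlonglongrightarrow> norm (coeff p Q) ^ k"
proof -
  define A where "A N = (\<Sum>n<N. \<Prod>i<k. P (y i n + s i)) / real N" for N
  define \<phi> where "\<phi> j = int j - int Q" for j
  define c where "c i j = coeff p j * e2pi (of_int (\<phi> j) * s i)" for i j
  have P_sum: "complex_of_real (P (t + s i)) = (\<Sum>j\<le>2 * Q. c i j * e2pi (of_int (\<phi> j) * t))" for i t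
  proof -
    have "complex_of_real (P (t + s i)) = (\<Sum>j\<le>2 * Q. coeff p j * e2pi (of_int (\<phi> j) * (t + s i)))"
      unfolding pP[symmetric] trig_poly_eq_sum[OF deg] \<phi>_def ..
    also have "\<dots> = (\<Sum>j\<le>2 * Q. c i j * e2pi (of_int (\<phi> j) * t))"
      unfolding c_def distrib_left e2pi_add by (simp only: mult_ac)
    finally show ?thesis .
  qed
  have "(\<lambda>N. (\<Sum>n<N. \<Prod>i<k. \<Sum>j\<le>2 * Q. c i j * e2pi (of_int (\<phi> j) * y i n)) / of_nat N)
      \<longlonglongrightarrow> (\<Prod>i<k. \<Sum>j\<in>{j\<in>{..2 * Q}. \<phi> j = 0}. c i j)"
    by (rule tendsto_avg_prod_trig_sums[OF _ weyl]) simp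
  moreover have "{j\<in>{..2 * Q}. \<phi> j = 0} = {Q}"
    unfolding \<phi>_def by auto
  moreover have "(\<Sum>n<N. \<Prod>i<k. \<Sum>j\<le>2 * Q. c i j * e2pi (of_int (\<phi> j) * y i n)) / of_nat N
      = complex_of_real (A N)" for N
    unfolding A_def P_sum[symmetric] by simp
  ultimately have "(\<lambda>N. complex_of_real (A N)) \<longlonglongrightarrow> coeff p Q ^ k"
    by (simp add: c_def \<phi>_def)
  then have "(\<lambda>N. norm (complex_of_real (A N))) \<longlonglongrightarrow> norm (coeff p Q) ^ k"
    by (auto dest: tendsto_norm simp: norm_power)
  moreover have "A N \<ge> 0" for N
    unfolding A_def using P0 by (simp add: sum_nonneg prod_nonneg)
  ultimately have "A \<longlonglongrightarrow> norm (coeff p Q) ^ k"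
    by simp
  then show ?thesis
    unfolding A_def .
qed

section \<open>Trigonometric majorants of arcs\<close>

lemma card_nat_set_in_interval_le:
  fixes S :: "nat set"
  assumes fin: "finite S" and sub: "\<forall>j\<in>S. lo < real j \<and> real j < hi" and lohi: "lo \<le> hi"
  shows "real (card S) \<le> hi - lo + 1"
proof (cases "S = {}")
  case True then show ?thesis using lohi by simp
next
  case False
  have "S \<subseteq> {Min S..Max S}" using fin by auto
  then have "card S \<le> card {Min S..Max S}" by (rule card_mono[OF finite_atLeastAtMost])
  also have "\<dots> = Suc (Max S) - Min S" by simp
  finally have c: "real (card S) \<le> real (Max S) + 1 - real (Min S)"
    using Min_le[OF fin Max_in[OF fin False]] by linarith
  have "real (Max S) < hi" using sub Max_in[OF fin False] by blast
  moreover have "lo < real (Min S)" using sub Min_in[OF fin False] by blast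
  ultimately show ?thesis using c by linarith
qed

lemma dist_half_lt_if_cos_lt:
  assumes t: "0 \<le> t" "t \<le> 1" and a: "0 \<le> a" "a \<le> pi" and c: "cos (2 * pi * t) < - cos a"
  shows "\<bar>t - 1/2\<bar> < a / (2 * pi)"
proof -
  define u where "u = \<bar>2 * pi * t - pi\<bar>"
  have u: "0 \<le> u" "u \<le> pi" unfolding u_def using t pi_gt_zero
    by (auto simp: abs_le_iff algebra_simps)
  have "cos (2 * pi * t) = - cos (2 * pi * t - pi)" by (simp add: cos_diff)
  also have "cos (2 * pi * t - pi) = cos u" unfolding u_def by simp
  finally have "cos a < cos u" using c by simp
  then have "u < a" using cos_mono_less_eq[OF a u] by simp
  moreover have "u = 2 * pi * \<bar>t - 1/2\<bar>"
  proof -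
    have "2 * pi * t - pi = (2 * pi) * (t - 1/2)" by (simp add: algebra_simps)
    then have "u = \<bar>2 * pi\<bar> * \<bar>t - 1/2\<bar>" unfolding u_def by (simp only: abs_mult)
    then show ?thesis by simp
  qed
  ultimately show ?thesis by (simp add: field_simps)
qed

lemma card_grid_points_near_half_le:
  fixes M :: nat and a :: real
  assumes M: "M > 0" and a: "0 \<le> a" "a \<le> pi"
  shows "real (card {j. j < M \<and> cos (2 * pi * (real j / real M)) < - cos a}) \<le> a / pi * real M + 1"
proof -
  define w where "w = a / (2 * pi)"
  define S where "S = {j. j < M \<and> cos (2 * pi * (real j / real M)) < - cos a}"
  have "real M / 2 - w * real M < real j \<and> real j < real M / 2 + w * real M" if "j \<in> S" for j
  proof -
    have j: "j < M" "cos (2 * pi * (real j / real M)) < - cos a"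
      using that unfolding S_def by auto
    have "\<bar>real j / real M - 1/2\<bar> < w"
      unfolding w_def using j M a by (intro dist_half_lt_if_cos_lt) auto
    then have "\<bar>real j / real M - 1/2\<bar> * real M < w * real M"
      using M by simp
    moreover have "\<bar>real j / real M - 1/2\<bar> * real M = \<bar>real j - real M / 2\<bar>"
      using M by (simp add: abs_mult_pos[symmetric] field_simps abs_mult)
    ultimately have "\<bar>real j - real M / 2\<bar> < w * real M"
      by simp
    then show ?thesis
      unfolding abs_less_iff by linarith
  qed
  then have "real (card S) \<le> 2 * w * real M + 1"
    using card_nat_set_in_interval_le[of S "real M / 2 - w * real M" "real M / 2 + w * real M"] a M
    unfolding w_def S_def by simp
  then show ?thesis
    unfolding S_def w_def by simp
qed

lemma grid_average_le_if_below_arc: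
  fixes P :: "real \<Rightarrow> real"
  assumes M: "M > 0" and a: "0 \<le> a" "a \<le> pi"
    and P: "\<And>y. P y \<le> (if cos (2 * pi * y) < - cos a then 1 else 0) + c"
  shows "(\<Sum>j<M. P (real j / real M)) / real M \<le> a / pi + 1 / real M + c"
proof -
  define S where "S = {j. j < M \<and> cos (2 * pi * (real j / real M)) < - cos a}"
  have "P (real j / real M) \<le> (if j \<in> S then 1 else 0) + c" if "j < M" for j
    using P[of "real j / real M"] that unfolding S_def by simp
  then have "(\<Sum>j<M. P (real j / real M)) \<le> (\<Sum>j<M. (if j \<in> S then 1 else 0) + c)"
    by (intro sum_mono) simp
  also have "\<dots> = real (card S) + c * real M"
  proof -
    have "{..<M} \<inter> S = S"
      unfolding S_def by auto
    then show ?thesis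
      by (simp add: sum.distrib sum.If_cases)
  qed
  also have "real (card S) \<le> a / pi * real M + 1"
    unfolding S_def using M a by (intro card_grid_points_near_half_le) auto
  finally show ?thesis
    using M by (simp add: field_simps)
qed

lemma trig_poly_ramp_majorant:
  assumes th: "0 < th" "th < a" "a \<le> pi" and e: "e > 0"
  obtains p Q P where "degree p \<le> 2 * Q" and "\<And>y. trig_poly Q p y = complex_of_real (P y)"
    and "\<And>y. P y \<ge> 0" and "\<And>y. cos (2 * pi * y) \<le> - cos th \<Longrightarrow> P y \<ge> 1"
    and "\<And>y. P y \<le> (if cos (2 * pi * y) < - cos a then 1 else 0) + 2 * e"
proof -
  have cos_a: "cos a < cos th"
    using th by (intro cos_monotone_0_pi) auto
  define \<phi> where "\<phi> x = max 0 (min 1 ((- cos a - x) / (cos th - cos a)))" for x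
  have "continuous_on {-1..1} \<phi>"
    unfolding \<phi>_def using cos_a by (intro continuous_intros) auto
  then obtain Q p g where deg: "degree p \<le> 2 * Q"
    and pg: "\<And>y. trig_poly Q p y = complex_of_real (g (cos (2 * pi * y)))"
    and g: "\<And>x. x \<in> {-1..1} \<Longrightarrow> \<bar>\<phi> x - g x\<bar> < e"
    using trig_poly_approx_of_cos e by metis
  define P where "P y = g (cos (2 * pi * y)) + e" for y
  have P_approx: "\<phi> (cos (2 * pi * y)) < P y" "P y < \<phi> (cos (2 * pi * y)) + 2 * e" for y
    using g[of "cos (2 * pi * y)"] unfolding P_def by auto
  show ?thesis
  proof
    show "degree (p + monom (complex_of_real e) Q) \<le> 2 * Q"
      using deg degree_monom_le[of "complex_of_real e" Q] by (intro degree_add_le) auto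
    show "trig_poly Q (p + monom (complex_of_real e) Q) y = complex_of_real (P y)" for y
      unfolding trig_poly_add_monom pg P_def by simp
    show "P y \<ge> 0" for y
      using P_approx(1)[of y] unfolding \<phi>_def by linarith
    show "P y \<ge> 1" if "cos (2 * pi * y) \<le> - cos th" for y
    proof -
      have "1 \<le> (- cos a - cos (2 * pi * y)) / (cos th - cos a)"
        using that cos_a by (simp add: field_simps)
      then show ?thesis
        using P_approx(1)[of y] unfolding \<phi>_def by linarith
    qed
    show "P y \<le> (if cos (2 * pi * y) < - cos a then 1 else 0) + 2 * e" for y
    proof (cases "cos (2 * pi * y) < - cos a")
      case True
      then show ?thesis
        using P_approx(2)[of y] unfolding \<phi>_def by simp
    next
      case False
      then have "\<phi> (cos (2 * pi * y)) = 0"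
        using cos_a unfolding \<phi>_def by (auto simp: divide_nonpos_pos)
      then show ?thesis
        using P_approx(2)[of y] False by simp
    qed
  qed
qed

lemma arc_majorant:
  fixes m :: nat and d :: real
  assumes m: "m > 0" and d: "d > 0"
  obtains p Q P where "degree p \<le> 2 * Q" and "\<And>y. trig_poly Q p y = complex_of_real (P y)"
    and "\<And>y. P y \<ge> 0" and "\<And>y. cos (2 * pi * y) \<le> - cos (pi / real m) \<Longrightarrow> P y \<ge> 1"
    and "norm (coeff p Q) \<le> 1 / real m + d"
proof (cases "m = 1")
  case True
  show ?thesis
    by (rule that[where Q = 0 and p = "[:1:]" and P = "\<lambda>_. 1"])
      (use True d in \<open>auto simp: trig_poly_def\<close>)
next
  case False
  then have m2: "real m \<ge> 2"
    using m by simp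
  define th where "th = pi / real m"
  define eta where "eta = min (d * pi / 3) (pi / 4)"
  define a where "a = th + eta"
  have "0 < th" "th \<le> pi / 2"
    unfolding th_def using m2 by (auto simp: field_simps)
  moreover have eta: "0 < eta" "eta \<le> pi / 4" "eta / pi \<le> d / 3"
    unfolding eta_def using d by (auto simp: field_simps min_def)
  ultimately have th: "0 < th" "th < a" "a \<le> pi"
    unfolding a_def by auto
  obtain p Q P where deg: "degree p \<le> 2 * Q" and pP: "\<And>y. trig_poly Q p y = complex_of_real (P y)"
    and P0: "\<And>y. P y \<ge> 0" and P1: "\<And>y. cos (2 * pi * y) \<le> - cos th \<Longrightarrow> P y \<ge> 1"
    and P_le: "\<And>y. P y \<le> (if cos (2 * pi * y) < - cos a then 1 else 0) + 2 * (d / 6)"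
    using trig_poly_ramp_majorant[OF th, of "d / 6"] d by auto
  define M where "M = max (2 * Q + 1) (nat \<lceil>6 / d\<rceil>)"
  have M: "M > 0" "2 * Q < M" "1 / real M \<le> d / 6"
  proof -
    show "M > 0" "2 * Q < M"
      unfolding M_def by auto
    have "real M \<ge> 6 / d"
      unfolding M_def by linarith
    then show "1 / real M \<le> d / 6"
      using d \<open>M > 0\<close> by (simp add: field_simps)
  qed
  define mean where "mean = (\<Sum>j<M. P (real j / real M)) / real M"
  have "mean \<le> a / pi + 1 / real M + 2 * (d / 6)"
    unfolding mean_def using M(1) th by (intro grid_average_le_if_below_arc P_le) auto
  also have "a / pi = 1 / real m + eta / pi"
    unfolding a_def th_def by (simp add: add_divide_distrib)
  finally have "mean \<le> 1 / real m + d"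
    using eta(3) M(3) d by linarith
  moreover have "coeff p Q = complex_of_real mean"
    using trig_poly_grid_mean[OF deg M(2)] unfolding mean_def by (simp add: pP)
  moreover have "mean \<ge> 0"
    unfolding mean_def using P0 by (simp add: sum_nonneg)
  ultimately have "norm (coeff p Q) \<le> 1 / real m + d"
    by simp
  then show ?thesis
    using that[OF deg pP P0] P1 unfolding th_def by blast
qed

section \<open>Block frequencies of integer parts\<close>

lemma cos_le_if_floor_mod_eq:
  fixes x :: real and m :: nat and b :: int
  assumes m: "m > 0" and b: "0 \<le> b" "b < int m" and hb: "\<lfloor>x\<rfloor> mod int m = b"
  shows "cos (2 * pi * (x / real m + (1/2 - (2 * real_of_int b + 1) / (2 * real m))))
    \<le> - cos (pi / real m)"
proof -
  define q where "q = \<lfloor>x\<rfloor> div int m"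
  have fl: "\<lfloor>x\<rfloor> = q * int m + b" unfolding q_def using hb by (metis div_mult_mod_eq)
  define f where "f = x - real_of_int \<lfloor>x\<rfloor>"
  have f: "0 \<le> f" "f < 1" unfolding f_def by linarith+
  define v where "v = (f - 1/2) / real m"
  have mpos: "real m > 0" using m by simp
  have xeq: "x = real_of_int q * real m + real_of_int b + f" unfolding f_def using fl by simp
  have arg: "x / real m + (1/2 - (2 * real_of_int b + 1) / (2 * real m)) = real_of_int q + 1/2 + v"
    unfolding v_def xeq using mpos by (simp add: field_simps)
  have "cos (2 * pi * (real_of_int q + 1/2 + v)) = cos ((2 * pi) * real_of_int q + (pi + 2 * pi * v))"
    by (simp add: algebra_simps)
  also have "\<dots> = cos (pi + 2 * pi * v)" by (simp add: cos_add)
  also have "\<dots> = - cos (2 * pi * v)" by (simp add: cos_add)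
  finally have c1: "cos (2 * pi * (real_of_int q + 1/2 + v)) = - cos (2 * pi * v)" .
  have av: "\<bar>2 * pi * v\<bar> \<le> pi / real m"
  proof -
    have "\<bar>f - 1/2\<bar> \<le> 1/2" unfolding abs_le_iff using f by linarith
    then have "\<bar>2 * pi * v\<bar> = 2 * pi * \<bar>f - 1/2\<bar> / real m"
      unfolding v_def using mpos by (simp add: abs_mult)
    also have "\<dots> \<le> 2 * pi * (1/2) / real m"
      using `\<bar>f - 1/2\<bar> \<le> 1/2` mpos by (intro divide_right_mono mult_left_mono) auto
    finally show ?thesis by simp
  qed
  have pm: "pi / real m \<le> pi" using m by (simp add: field_simps)
  have "cos (pi / real m) \<le> cos \<bar>2 * pi * v\<bar>"
    using av pm by (intro cos_monotone_0_pi_le) auto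
  then have "cos (pi / real m) \<le> cos (2 * pi * v)" by simp
  then show ?thesis unfolding arg c1 by simp
qed

lemma real_card_filter_lessThan:
  fixes N :: nat
  shows "real (card {n. n < N \<and> P n}) = (\<Sum>n<N. if P n then 1 else 0)"
  using sum.inter_filter[OF finite_lessThan[of N], of "\<lambda>_. 1::real" P] by simp

lemma block_frequency_eventually_le:
  fixes x :: "nat \<Rightarrow> real" and m k :: nat and B :: "int list" and d :: real
  assumes weyl: "\<And>h. (\<exists>i<k. h i \<noteq> 0) \<Longrightarrow> weyl_sums_vanish (\<lambda>n. \<Sum>i<k. of_int (h i) * (x (n + i) / real m))"
    and m: "m > 0" and B: "length B = k" "set B \<subseteq> {0..<int m}" and d: "d > 0"
  shows "eventually (\<lambda>N. real (card {n. n < N \<and> (\<forall>i<k. \<lfloor>x (n + i)\<rfloor> mod int m = B ! i)}) / real N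
    \<le> (1 / real m + d) ^ k + d) sequentially"
proof -
  obtain Q p P where deg: "degree p \<le> 2 * Q" and pP: "\<And>y. trig_poly Q p y = complex_of_real (P y)"
    and P0: "\<And>y. P y \<ge> 0" and P1: "\<And>y. cos (2 * pi * y) \<le> - cos (pi / real m) \<Longrightarrow> P y \<ge> 1"
    and coeff: "norm (coeff p Q) \<le> 1 / real m + d"
    using arc_majorant[OF m d] by metis
  \<comment> \<open>the shift s i moves the residue class B ! i onto the arc around 1/2 where P \<ge> 1\<close>
  define s where "s i = 1/2 - (2 * real_of_int (B ! i) + 1) / (2 * real m)" for i
  define y where "y i n = x (n + i) / real m" for i n
  define A where "A N = (\<Sum>n<N. \<Prod>i<k. P (y i n + s i)) / real N" for N
  have "A \<longlonglongrightarrow> norm (coeff p Q) ^ k"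
    unfolding A_def y_def using deg pP P0 weyl by (rule tendsto_avg_prod_shifted_trig_poly)
  then have ev: "eventually (\<lambda>N. A N < norm (coeff p Q) ^ k + d) sequentially"
    using d by (intro order_tendstoD(2)) auto
  have power_le: "norm (coeff p Q) ^ k \<le> (1 / real m + d) ^ k"
    using coeff by (intro power_mono) auto
  have count_le: "real (card {n. n < N \<and> (\<forall>i<k. \<lfloor>x (n + i)\<rfloor> mod int m = B ! i)}) / real N \<le> A N" for N
  proof -
    have "(if \<forall>i<k. \<lfloor>x (n + i)\<rfloor> mod int m = B ! i then 1 else 0) \<le> (\<Prod>i<k. P (y i n + s i))" for n
    proof -
      have "1 \<le> P (y i n + s i)" if "\<forall>i<k. \<lfloor>x (n + i)\<rfloor> mod int m = B ! i" "i < k" for i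
      proof -
        have "B ! i \<in> set B"
          using that(2) B(1) by simp
        then have "0 \<le> B ! i" "B ! i < int m"
          using B(2) by auto
        then have "cos (2 * pi * (y i n + s i)) \<le> - cos (pi / real m)"
          unfolding y_def s_def using that by (intro cos_le_if_floor_mod_eq[OF m]) auto
        then show ?thesis
          by (rule P1)
      qed
      then show ?thesis
        using P0 by (auto intro: prod_ge_1 prod_nonneg)
    qed
    then have "(\<Sum>n<N. if \<forall>i<k. \<lfloor>x (n + i)\<rfloor> mod int m = B ! i then 1 else 0)
        \<le> (\<Sum>n<N. \<Prod>i<k. P (y i n + s i))"
      by (rule sum_mono)
    then show ?thesis
      unfolding A_def real_card_filter_lessThan by (simp add: divide_right_mono)
  qed
  show ?thesis
    using ev
  proof (rule eventually_mono)
    fix N assume "A N < norm (coeff p Q) ^ k + d"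
    then show "real (card {n. n < N \<and> (\<forall>i<k. \<lfloor>x (n + i)\<rfloor> mod int m = B ! i)}) / real N
        \<le> (1 / real m + d) ^ k + d"
      using count_le[of N] power_le by linarith
  qed
qed

lemma sum_block_counts:
  fixes u :: "nat \<Rightarrow> int" and m k N :: nat
  assumes m: "m > 0"
  shows "(\<Sum>B\<in>{B. set B \<subseteq> {0..<int m} \<and> length B = k}.
      real (card {n. n < N \<and> (\<forall>i<k. u (n + i) mod int m = B ! i)})) = real N"
proof -
  define Bl where "Bl = {B. set B \<subseteq> {0..<int m} \<and> length B = k}"
  have finBl: "finite Bl" unfolding Bl_def by (rule finite_lists_length_eq) simp
  define bl where "bl n = map (\<lambda>i. u (n + i) mod int m) [0..<k]" for n
  have blin: "bl n \<in> Bl" for n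
    unfolding Bl_def bl_def using m by auto
  have iff: "(\<forall>i<k. u (n + i) mod int m = B ! i) \<longleftrightarrow> B = bl n" if "B \<in> Bl" for B n
  proof -
    have lB: "length B = k" using that unfolding Bl_def by simp
    show ?thesis
    proof
      assume h: "\<forall>i<k. u (n + i) mod int m = B ! i"
      show "B = bl n" by (rule nth_equalityI) (use lB h in \<open>auto simp: bl_def\<close>)
    next
      assume "B = bl n"
      then show "\<forall>i<k. u (n + i) mod int m = B ! i" by (simp add: bl_def)
    qed
  qed
  have "(\<Sum>B\<in>Bl. real (card {n. n < N \<and> (\<forall>i<k. u (n + i) mod int m = B ! i)}))
      = (\<Sum>B\<in>Bl. \<Sum>n<N. if B = bl n then 1 else 0)"
    by (intro sum.cong refl) (simp add: real_card_filter_lessThan iff cong: if_cong)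
  also have "\<dots> = (\<Sum>n<N. \<Sum>B\<in>Bl. if B = bl n then 1 else 0)" by (rule sum.swap)
  also have "\<dots> = (\<Sum>n<N. 1)" using finBl blin by (simp add: sum.delta')
  finally show ?thesis unfolding Bl_def by simp
qed

lemma tendsto_inverse_card_if_limsup_le:
  fixes f :: "'a \<Rightarrow> nat \<Rightarrow> real"
  assumes S: "finite S" "s \<in> S"
    and sum1: "eventually (\<lambda>N. (\<Sum>t\<in>S. f t N) = 1) sequentially"
    and upper: "\<And>t e. t \<in> S \<Longrightarrow> e > 0 \<Longrightarrow> eventually (\<lambda>N. f t N \<le> 1 / card S + e) sequentially"
  shows "f s \<longlonglongrightarrow> 1 / card S"
proof (rule tendstoI)
  fix e :: real assume e: "e > 0"
  define M where "M = real (card S)"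
  have "card S > 0"
    using S by (auto simp: card_gt_0_iff)
  then have M: "M \<ge> 1"
    unfolding M_def by simp
  define e' where "e' = e / (2 * M)"
  have e': "e' > 0" "M * e' < e" "e' < e"
    unfolding e'_def using e M by (auto simp: field_simps)
  have "eventually (\<lambda>N. \<forall>t\<in>S. f t N \<le> 1 / M + e') sequentially"
    using S(1) upper e'(1) unfolding M_def by (intro eventually_ball_finite) auto
  with sum1 show "eventually (\<lambda>N. dist (f s N) (1 / card S) < e) sequentially"
  proof eventually_elim
    case (elim N)
    have "(\<Sum>t\<in>S - {s}. f t N) \<le> real (card (S - {s})) * (1 / M + e')"
      using elim(2) by (intro sum_bounded_above) auto
    also have "real (card (S - {s})) = M - 1"
      unfolding M_def using S \<open>card S > 0\<close> by (simp add: of_nat_diff)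
    finally have "1 - f s N \<le> (M - 1) * (1 / M + e')"
      using elim(1) sum.remove[OF S, of "\<lambda>t. f t N"] by simp
    moreover have "(M - 1) * (1 / M + e') = 1 - 1 / M + (M - 1) * e'"
      using M by (simp add: field_simps)
    moreover have "(M - 1) * e' < e"
      using e' by (simp add: algebra_simps)
    moreover have "f s N \<le> 1 / M + e'"
      using elim(2) S(2) by blast
    ultimately show ?case
      using e' unfolding M_def[symmetric] dist_real_def abs_less_iff by linarith
  qed
qed

theorem k_unif_distrib_mod_floor_if_weyl_sums_vanish:
  fixes x :: "nat \<Rightarrow> real" and m k :: nat
  assumes m: "m > 0"
    and weyl: "\<And>h. (\<exists>i<k. h i \<noteq> 0) \<Longrightarrow> weyl_sums_vanish (\<lambda>n. \<Sum>i<k. of_int (h i) * (x (n + i) / real m))"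
  shows "k_unif_distrib_mod k m (\<lambda>n. \<lfloor>x n\<rfloor>)"
  unfolding k_unif_distrib_mod_def
proof (intro allI impI)
  fix B :: "int list" assume B: "length B = k \<and> set B \<subseteq> {0..<int m}"
  define S where "S = {B. set B \<subseteq> {0..<int m} \<and> length B = k}"
  define f where "f B N = real (card {n. n < N \<and> (\<forall>i<k. \<lfloor>x (n + i)\<rfloor> mod int m = B ! i)}) / real N"
    for B N
  have S: "finite S" "B \<in> S"
    unfolding S_def using B by (auto intro: finite_lists_length_eq)
  have card_S: "real (card S) = real m ^ k"
    unfolding S_def using card_lists_length_eq[of "{0..<int m}" k] by simp
  have counts: "(\<Sum>B'\<in>S. real (card {n. n < N \<and> (\<forall>i<k. \<lfloor>x (n + i)\<rfloor> mod int m = B' ! i)}))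
      = real N" for N
    unfolding S_def by (rule sum_block_counts[OF m])
  have "eventually (\<lambda>N. (\<Sum>B'\<in>S. f B' N) = 1) sequentially"
    using eventually_gt_at_top[of "0::nat"]
    by eventually_elim (simp add: f_def counts flip: sum_divide_distrib)
  moreover have "eventually (\<lambda>N. f B' N \<le> 1 / card S + e) sequentially"
    if "B' \<in> S" "e > 0" for B' e
  proof -
    have "((\<lambda>d. (1 / real m + d) ^ k + d) \<longlongrightarrow> (1 / real m + 0) ^ k + 0) (at_right 0)"
      by (intro tendsto_intros)
    then have ev: "eventually (\<lambda>d. (1 / real m + d) ^ k + d < 1 / real m ^ k + e) (at_right 0)"
      using \<open>e > 0\<close> by (intro order_tendstoD(2)) (auto simp: power_one_over)
    obtain d :: real where "d > 0" "(1 / real m + d) ^ k + d < 1 / real m ^ k + e"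
      using eventually_happens[OF eventually_conj[OF eventually_at_right_less ev]] by auto
    then show ?thesis
      using block_frequency_eventually_le[OF weyl m _ _ \<open>d > 0\<close>, of B'] that card_S
      unfolding S_def f_def by (auto elim: eventually_mono)
  qed
  ultimately have "f B \<longlonglongrightarrow> 1 / card S"
    using S by (intro tendsto_inverse_card_if_limsup_le) auto
  then show "(\<lambda>N. real (card {n. n < N \<and> (\<forall>i<k. \<lfloor>x (n + i)\<rfloor> mod int m = B ! i)}) / real N)
      \<longlonglongrightarrow> 1 / real m ^ k"
    unfolding f_def card_S .
qed

theorem theorem1:
  fixes c :: real and m :: nat
  assumes "c > 1" and "c \<notin> \<int>" and "m > 0"
  shows "\<forall>k::nat. 1 \<le> k \<and> real k \<le> c + 1 \<longrightarrow>
           k_unif_distrib_mod k m (\<lambda>n. \<lfloor>real n powr c\<rfloor>)"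
proof (intro allI impI)
  fix k :: nat
  assume k: "1 \<le> k \<and> real k \<le> c + 1"
  show "k_unif_distrib_mod k m (\<lambda>n. \<lfloor>real n powr c\<rfloor>)"
  proof (rule k_unif_distrib_mod_floor_if_weyl_sums_vanish[OF \<open>m > 0\<close>])
    fix h :: "nat \<Rightarrow> int"
    assume "\<exists>i<k. h i \<noteq> 0"
    then obtain i0 where "i0 < k" "of_int (h i0) / real m \<noteq> 0"
      using \<open>m > 0\<close> by auto
    then have "weyl_sums_vanish (\<lambda>n. \<Sum>i<k. of_int (h i) / real m * real (n + i) powr c)"
      using \<open>c \<notin> \<int>\<close> k by (intro weyl_sums_vanish_shifted_powers) auto
    then show "weyl_sums_vanish (\<lambda>n. \<Sum>i<k. of_int (h i) * (real (n + i) powr c / real m))"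
      by simp
  qed
qed

end
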